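(* Let $k\in\mathbb Z_{>0}$, $1+\frac1n<p<1+\frac{k+1}{kn}$, and $u_0\in L^1(\mathbb R^n)$. Then for every $q\in[1,\infty]$ there exists $C>0$ such that for all $t>1$, $$t^{\frac n2(1-\frac1q)}\|\mathcal A_{0,k}(t)\|_q\le C,\qquad t^{\frac n2(1-\frac1q)}\|\mathcal A_{0,k}(t)-\mathcal A_{0,k-1}(t)\|_q\le Ct^{-k\sigma}.$$ Moreover, for $k=1$ the second estimate holds for all $t>0$.
   Context: Let $n\ge1$, $a\in\mathbb R^n\setminus\{0\}$, $p\in(1,\infty)$, and let $f\in C^1(\mathbb R)$, $f\not\equiv0$, $f(0)=0$, satisfy $|f(\xi)-f(\eta)|\le C(|\xi|^{p-1}+|\eta|^{p-1})|\xi-\eta|$. $\|\cdot\|_q$ is the $L^q(\mathbb R^n)$ norm. $G_t(x)=(4\pi t)^{-n/2}e^{-|x|^2/(4t)}$, $e^{t\Delta}\varphi=G_t*\varphi$. $\mathcal M_0(\varphi)=\int\varphi$; $\mathcal A_0(t)=\mathcal M_0(u_0)G_t$; $\sigma=\frac n2(p-1)-\frac12$. $\mathcal A_{0,0}=\mathcal A_0$, and for $k\ge1$, $\mathcal A_{0,k}(t)=\mathcal A_0(t)+\int_0^1a\cdot\nabla e^{(t-s)\Delta}f(\mathcal A_0(s))ds+\int_1^ta\cdot\nabla e^{(t-s)\Delta}f(\mathcal A_{0,k-1}(s))ds$ (for $k=1$ this equals $\mathcal A_0(t)+\int_0^ta\cdot\nabla e^{(t-s)\Delta}f(\mathcal A_0(s))ds$,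 defined for all $t>0$). *)

theory Defs
  imports "HOL-Analysis.Analysis" "HOL-Probability.Probability"
begin

text \<open>Space R^n is modelled by a Euclidean space type 'a, with n = DIM('a);
  Lebesgue measure is lborel.\<close>

definition heat_kernel :: "real \<Rightarrow> 'a::euclidean_space \<Rightarrow> real" where
  "heat_kernel t x = (4 * pi * t) powr (- real DIM('a) / 2) * exp (- (norm x)\<^sup>2 / (4 * t))"

definition heat :: "real \<Rightarrow> ('a::euclidean_space \<Rightarrow> real) \<Rightarrow> 'a \<Rightarrow> real" where
  "heat t \<phi> x = (\<integral> y. heat_kernel t (x - y) * \<phi> y \<partial>lborel)"

definition dir_deriv :: "'a::euclidean_space \<Rightarrow> ('a \<Rightarrow> real) \<Rightarrow> 'a \<Rightarrow> real" where
  "dir_deriv a h x = deriv (\<lambda>\<epsilon>. h (x + \<epsilon> *\<^sub>R a)) 0"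

definition Lq_norm :: "ereal \<Rightarrow> ('a::euclidean_space \<Rightarrow> real) \<Rightarrow> ennreal" where
  "Lq_norm q g =
     (if q = \<infinity> then esssup lborel (\<lambda>x. ennreal \<bar>g x\<bar>)
      else (let I = (\<integral>\<^sup>+ x. ennreal (\<bar>g x\<bar> powr real_of_ereal q) \<partial>lborel)
            in if I = \<infinity> then \<infinity> else ennreal (enn2real I powr (1 / real_of_ereal q))))"

definition inv_exp :: "ereal \<Rightarrow> real" where
  "inv_exp q = (if q = \<infinity> then 0 else 1 / real_of_ereal q)"

definition mass :: "('a::euclidean_space \<Rightarrow> real) \<Rightarrow> real" where
  "mass \<phi> = (\<integral> x. \<phi> x \<partial>lborel)"

definition A0 :: "('a::euclidean_space \<Rightarrow> real) \<Rightarrow> real \<Rightarrow> 'a \<Rightarrow> real" where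
  "A0 u0 t x = mass u0 * heat_kernel t x"

definition duhamel :: "'a::euclidean_space \<Rightarrow> (real \<Rightarrow> real) \<Rightarrow> (real \<Rightarrow> 'a \<Rightarrow> real)
    \<Rightarrow> real set \<Rightarrow> real \<Rightarrow> 'a \<Rightarrow> real" where
  "duhamel a f U S t x = (\<integral> s\<in>S. dir_deriv a (heat (t - s) (\<lambda>y. f (U s y))) x \<partial>lborel)"

fun Aiter :: "'a::euclidean_space \<Rightarrow> (real \<Rightarrow> real) \<Rightarrow> ('a \<Rightarrow> real) \<Rightarrow> nat \<Rightarrow> real \<Rightarrow> 'a \<Rightarrow> real" where
  "Aiter a f u0 0 t x = A0 u0 t x"
| "Aiter a f u0 (Suc 0) t x = A0 u0 t x + duhamel a f (A0 u0) {0<..<t} t x"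
| "Aiter a f u0 (Suc (Suc k)) t x =
     A0 u0 t x + duhamel a f (A0 u0) {0<..<1} t x
       + duhamel a f (Aiter a f u0 (Suc k)) {1<..<t} t x"

end

theory Submission
  imports Defs
begin

text \<open>All iterates are dominated by multiples of one Gaussian profile
  Phi(t,x) = t^(-n/2) exp(-|x|^2/(8t)). Since |f(u)| <= L |u|^p, a Duhamel integrand
  a.grad e^((t-s)Delta) f(U(s)) with |U(s)| <= m Phi(s) is bounded, via an explicit Gaussian
  convolution, by a constant times (t-s)^(-1/2) s^(-n(p-1)/2) Phi(t); integrating in s gives a Beta
  function and the factor t^(-sigma), finite because n(p-1)/2 < 1. The difference
  A_{0,k+1} - A_{0,k} is the Duhamel term of f(A_{0,k}) - f(A_{0,k-1}) over (1,t), so the local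
  Lipschitz bound and induction put an extra factor s^(-k sigma) into the Beta integral; it stays
  finite while (k+1) sigma < 1/2, i.e. p < 1 + (k+1)/(kn), and gains t^(-sigma) per step.
  Finally ||Phi(t)||_q = c_q t^(-n/2 (1 - 1/q)).\<close>

section \<open>Gaussian integrals\<close>

lemma nn_integral_gaussian_finite:
  "(\<integral>\<^sup>+x. ennreal (exp (- (norm (x::'a::euclidean_space))\<^sup>2)) \<partial>lborel) < \<infinity>"
proof -
  have "integrable lborel (\<lambda>x. sqrt pi * normal_density 0 (1/sqrt 2) x)" by simp
  moreover have "(\<lambda>x. sqrt pi * normal_density 0 (1/sqrt 2) x) = (\<lambda>x. exp (- x\<^sup>2))"
    by (auto simp: normal_density_def power_divide real_sqrt_mult)
  ultimately have "(\<integral>\<^sup>+x. ennreal (exp (- x\<^sup>2)) \<partial>(lborel::real measure)) < \<infinity>"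
    by (simp add: integrable_iff_bounded)
  moreover have "ennreal (exp (- (norm x)\<^sup>2)) = (\<Prod>b\<in>Basis. ennreal (exp (- (x \<bullet> b)\<^sup>2)))" for x :: 'a
  proof -
    have "(norm x)\<^sup>2 = (\<Sum>b\<in>Basis. (x \<bullet> b)\<^sup>2)"
      unfolding power2_norm_eq_inner by (subst euclidean_inner) (simp add: power2_eq_square)
    then show ?thesis by (simp add: exp_sum[symmetric] sum_negf prod_ennreal)
  qed
  then have "(\<integral>\<^sup>+x. ennreal (exp (- (norm (x::'a))\<^sup>2)) \<partial>lborel)
      = (\<Prod>b\<in>(Basis::'a set). (\<integral>\<^sup>+x. ennreal (exp (- x\<^sup>2)) \<partial>lborel))"
    by (simp only:) (rule nn_integral_lborel_prod, auto)
  ultimately show ?thesis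
    by (simp add: less_top[symmetric] power_eq_top_ennreal)
qed

definition gaussian_mass :: "'a::euclidean_space itself \<Rightarrow> real" where
  "gaussian_mass _ = enn2real (\<integral>\<^sup>+x. ennreal (exp (- (norm (x::'a))\<^sup>2)) \<partial>lborel)"

lemma gaussian_mass_nonneg: "0 \<le> gaussian_mass TYPE('a::euclidean_space)"
  by (simp add: gaussian_mass_def)

lemma nn_integral_gaussian_affine:
  fixes z :: "'a::euclidean_space"
  assumes c: "0 < c"
  shows "(\<integral>\<^sup>+x. ennreal (exp (- c * (norm (x - z))\<^sup>2)) \<partial>lborel)
       = ennreal (c powr (- real DIM('a) / 2) * gaussian_mass TYPE('a))"
proof -
  define r where "r = 1 / sqrt c"
  have r: "0 < r" using c by (simp add: r_def)
  let ?F = "\<lambda>x::'a. ennreal (exp (- c * (norm (x - z))\<^sup>2))"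
  have "lborel = density (distr lborel borel (\<lambda>x::'a. z + r *\<^sub>R x)) (\<lambda>_. \<bar>r\<bar>^DIM('a))"
    by (rule lborel_affine) (use r in auto)
  then have "integral\<^sup>N lborel ?F
      = integral\<^sup>N (density (distr lborel borel (\<lambda>x::'a. z + r *\<^sub>R x)) (\<lambda>_. \<bar>r\<bar>^DIM('a))) ?F"
    by (rule arg_cong)
  also have "\<dots> = (\<integral>\<^sup>+x. ennreal (\<bar>r\<bar>^DIM('a)) * ?F (z + r *\<^sub>R x) \<partial>lborel)"
    by (simp add: nn_integral_density nn_integral_distr)
  also have "\<dots> = (\<integral>\<^sup>+x. ennreal (\<bar>r\<bar>^DIM('a)) * ennreal (exp (- (norm (x::'a))\<^sup>2)) \<partial>lborel)"
    using c r by (simp add: r_def power_mult_distrib real_sqrt_pow2 power_divide)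
  also have "\<dots> = ennreal (\<bar>r\<bar>^DIM('a) * gaussian_mass TYPE('a))"
    using nn_integral_gaussian_finite[where 'a='a]
    by (simp add: nn_integral_cmult gaussian_mass_def ennreal_mult ennreal_enn2real_if)
  also have "\<bar>r\<bar>^DIM('a) = c powr (- real DIM('a) / 2)"
  proof -
    have "\<bar>r\<bar>^DIM('a) = (c powr (-1/2)) powr real DIM('a)"
      using c r by (simp add: powr_realpow r_def powr_minus_divide powr_half_sqrt)
    then show ?thesis by (simp add: powr_powr)
  qed
  finally show ?thesis .
qed

lemma integrable_gaussian:
  fixes z :: "'a::euclidean_space"
  assumes "0 < c"
  shows "integrable lborel (\<lambda>y. exp (- c * (norm (y - z))\<^sup>2))"
  using nn_integral_gaussian_affine[OF assms, of z] by (simp add: integrable_iff_bounded)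

lemma complete_square:
  fixes x y :: "'a::real_inner"
  assumes "0 < \<alpha>" "0 < \<beta>"
  shows "\<alpha> * (norm (x - y))\<^sup>2 + \<beta> * (norm y)\<^sup>2
     = (\<alpha> * \<beta> / (\<alpha> + \<beta>)) * (norm x)\<^sup>2 + (\<alpha> + \<beta>) * (norm (y - (\<alpha> / (\<alpha> + \<beta>)) *\<^sub>R x))\<^sup>2"
proof -
  define c where "c = \<alpha> / (\<alpha> + \<beta>)"
  have s: "\<alpha> + \<beta> \<noteq> 0" using assms by simp
  have sc: "(\<alpha> + \<beta>) * c = \<alpha>" and ab: "\<alpha> * \<beta> / (\<alpha> + \<beta>) = \<alpha> - \<alpha> * c"
    using s by (simp_all add: c_def field_simps)
  have "\<alpha> * (x \<bullet> x - 2 * (x \<bullet> y) + y \<bullet> y) + \<beta> * (y \<bullet> y)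
      = (\<alpha> - \<alpha> * c) * (x \<bullet> x) + (\<alpha> + \<beta>) * (y \<bullet> y - 2 * c * (x \<bullet> y) + c * c * (x \<bullet> x))"
  proof -
    have "(\<alpha> - \<alpha> * c) * (x \<bullet> x) + (\<alpha> + \<beta>) * (y \<bullet> y - 2 * c * (x \<bullet> y) + c * c * (x \<bullet> x))
        = (\<alpha> - \<alpha> * c) * (x \<bullet> x) + (\<alpha> + \<beta>) * (y \<bullet> y) - 2 * ((\<alpha> + \<beta>) * c) * (x \<bullet> y)
          + ((\<alpha> + \<beta>) * c) * c * (x \<bullet> x)"
      by (simp add: algebra_simps)
    then show ?thesis unfolding sc by (simp add: algebra_simps)
  qed
  then show ?thesis
    unfolding c_def[symmetric] ab power2_norm_eq_inner
    by (simp add: inner_diff_left inner_diff_right inner_commute algebra_simps)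
qed

lemma nn_integral_gaussian_product:
  fixes x :: "'a::euclidean_space"
  assumes a: "0 < \<alpha>" "0 < \<beta>"
  shows "(\<integral>\<^sup>+y. ennreal (exp (- \<alpha> * (norm (x - y))\<^sup>2) * exp (- \<beta> * (norm y)\<^sup>2)) \<partial>lborel)
     = ennreal (exp (- (\<alpha> * \<beta> / (\<alpha> + \<beta>)) * (norm x)\<^sup>2) * (\<alpha> + \<beta>) powr (- real DIM('a) / 2)
                * gaussian_mass TYPE('a))"
proof -
  let ?z = "(\<alpha> / (\<alpha> + \<beta>)) *\<^sub>R x"
  have "exp (- \<alpha> * (norm (x - y))\<^sup>2) * exp (- \<beta> * (norm y)\<^sup>2)
      = exp (- (\<alpha> * \<beta> / (\<alpha> + \<beta>)) * (norm x)\<^sup>2) * exp (- (\<alpha> + \<beta>) * (norm (y - ?z))\<^sup>2)" for y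
    unfolding exp_add[symmetric] using complete_square[OF a, of x y] by (simp add: algebra_simps)
  then have "(\<integral>\<^sup>+y. ennreal (exp (- \<alpha> * (norm (x - y))\<^sup>2) * exp (- \<beta> * (norm y)\<^sup>2)) \<partial>lborel)
      = (\<integral>\<^sup>+y. ennreal (exp (- (\<alpha> * \<beta> / (\<alpha> + \<beta>)) * (norm x)\<^sup>2))
                 * ennreal (exp (- (\<alpha> + \<beta>) * (norm (y - ?z))\<^sup>2)) \<partial>lborel)"
    by (simp add: ennreal_mult)
  also have "\<dots> = ennreal (exp (- (\<alpha> * \<beta> / (\<alpha> + \<beta>)) * (norm x)\<^sup>2))
      * ennreal ((\<alpha> + \<beta>) powr (- real DIM('a) / 2) * gaussian_mass TYPE('a))"
  proof -
    have "0 < \<alpha> + \<beta>" using a by simp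
    then show ?thesis by (subst nn_integral_cmult) (measurable, simp only: nn_integral_gaussian_affine)
  qed
  finally show ?thesis
    by (simp add: ennreal_mult[symmetric] gaussian_mass_nonneg mult_ac)
qed

section \<open>The Beta integral in time\<close>

lemma nn_integral_Beta_scaled:
  assumes b: "0 \<le> \<beta>" "\<beta> < 1" and t: "0 < t"
  shows "(\<integral>\<^sup>+s. ennreal (indicator {0<..<t} s * ((t - s) powr (-1/2) * s powr (-\<beta>))) \<partial>lborel)
     = ennreal (Beta (1 - \<beta>) (1/2) * t powr (1/2 - \<beta>))"
proof -
  let ?h = "\<lambda>s. ennreal (indicator {0<..<t} s * ((t - s) powr (-1/2) * s powr (-\<beta>)))"
  let ?g = "\<lambda>u. ennreal (indicator {0<..<1} u * (u powr (-\<beta>) * (1 - u) powr (-1/2)))"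
  have "((\<lambda>u. u powr ((1 - \<beta>) - 1) * (1 - u) powr (1/2 - 1)) has_integral Beta (1 - \<beta>) (1/2)) {0..1}"
    using b by (intro has_integral_Beta_real) auto
  then have "((\<lambda>u. u powr (- \<beta>) * (1 - u) powr (-1/2)) has_integral Beta (1 - \<beta>) (1/2)) {0<..<1}"
    by (simp add: has_integral_Icc_iff_Ioo)
  from nn_integral_has_integral_lebesgue[OF _ this]
  have Beta: "integral\<^sup>N lborel ?g = ennreal (Beta (1 - \<beta>) (1/2))"
    by (simp add: mult_ac)
  have scale: "?h (0 + t * u) = ennreal (t powr (-1/2 - \<beta>)) * ?g u" for u
  proof (cases "0 < u \<and> u < 1")
    case True
    then have "(t * (1 - u)) powr (-1/2) * (t * u) powr (-\<beta>)
        = (t powr (-1/2) * t powr (-\<beta>)) * (u powr (-\<beta>) * (1 - u) powr (-1/2))"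
      using t by (simp add: powr_mult)
    also have "t powr (-1/2) * t powr (-\<beta>) = t powr (-1/2 - \<beta>)"
      by (simp add: powr_add[symmetric])
    finally have "(t - t * u) powr (-1/2) * (t * u) powr (-\<beta>)
        = t powr (-1/2 - \<beta>) * (u powr (-\<beta>) * (1 - u) powr (-1/2))"
      by (simp add: right_diff_distrib)
    then show ?thesis using True t
      by (simp add: indicator_def ennreal_mult[symmetric])
  next
    case False
    then have "t * u \<notin> {0<..<t}" using t
      by (auto simp: zero_less_mult_iff mult_less_cancel_left1)
    moreover have "u \<notin> {0<..<1}" using False by simp
    ultimately show ?thesis by simp
  qed
  have "integral\<^sup>N lborel ?h = ennreal t * (\<integral>\<^sup>+u. ?h (0 + t * u) \<partial>lborel)"
    using t by (subst nn_integral_real_affine[where t=0 and c=t]) auto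
  also have "\<dots> = ennreal t * (ennreal (t powr (-1/2 - \<beta>)) * ennreal (Beta (1 - \<beta>) (1/2)))"
    unfolding scale by (subst nn_integral_cmult, measurable) (simp only: Beta)
  also have "\<dots> = ennreal (Beta (1 - \<beta>) (1/2) * t powr (1/2 - \<beta>))"
  proof -
    have "t * t powr (-1/2 - \<beta>) = t powr (1/2 - \<beta>)"
      using t by (simp add: powr_add[symmetric] powr_mult_base)
    moreover have "Beta (1 - \<beta>) (1/2) \<ge> 0" using b by (simp add: Beta_def)
    ultimately show ?thesis using t by (simp add: ennreal_mult[symmetric] mult_ac)
  qed
  finally show ?thesis .
qed

lemma ennreal_abs_integral_le:
  fixes f :: "'b \<Rightarrow> real"
  shows "ennreal \<bar>\<integral>y. f y \<partial>M\<bar> \<le> (\<integral>\<^sup>+y. ennreal \<bar>f y\<bar> \<partial>M)"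
  using integral_norm_bound_ennreal[of M f] by (cases "integrable M f") (auto simp: not_integrable_integral_eq)

lemma nn_integral_Beta_dominated_le:
  fixes D :: "real \<Rightarrow> real"
  assumes S: "S \<subseteq> {0<..<t}" and c: "0 \<le> c"
    and D: "\<And>s. s \<in> S \<Longrightarrow> \<bar>D s\<bar> \<le> c * ((t - s) powr (-1/2) * s powr (-\<beta>))"
  shows "(\<integral>\<^sup>+s. ennreal \<bar>indicator S s * D s\<bar> \<partial>lborel)
     \<le> ennreal c * (\<integral>\<^sup>+s. ennreal (indicator {0<..<t} s * ((t - s) powr (-1/2) * s powr (-\<beta>))) \<partial>lborel)"
proof -
  have "ennreal \<bar>indicator S s * D s\<bar>
      \<le> ennreal c * ennreal (indicator {0<..<t} s * ((t - s) powr (-1/2) * s powr (-\<beta>)))" for s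
  proof (cases "s \<in> S")
    case True
    then have "s \<in> {0<..<t}" using S by auto
    then show ?thesis using D[OF True] True c by (simp add: ennreal_mult[symmetric] ennreal_leI)
  qed simp
  then show ?thesis
    by (subst nn_integral_cmult[symmetric]) (measurable, rule nn_integral_mono)
qed

lemma integrable_Beta_dominated:
  fixes D :: "real \<Rightarrow> real"
  assumes S: "S \<subseteq> {0<..<t}" and t: "0 < t" and \<beta>: "0 \<le> \<beta>" "\<beta> < 1" and c: "0 \<le> c"
    and Dm: "(\<lambda>s. indicator S s * D s) \<in> borel_measurable lborel"
    and D: "\<And>s. s \<in> S \<Longrightarrow> \<bar>D s\<bar> \<le> c * ((t - s) powr (-1/2) * s powr (-\<beta>))"
  shows "integrable lborel (\<lambda>s. indicator S s * D s)"
proof (rule integrableI_bounded[OF Dm])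
  have "(\<integral>\<^sup>+s. ennreal \<bar>indicator S s * D s\<bar> \<partial>lborel)
      \<le> ennreal c * ennreal (Beta (1 - \<beta>) (1/2) * t powr (1/2 - \<beta>))"
    using nn_integral_Beta_dominated_le[OF S c D] nn_integral_Beta_scaled[OF \<beta> t] by simp
  also have "\<dots> < \<infinity>" by (simp add: ennreal_mult_less_top)
  finally show "(\<integral>\<^sup>+s. ennreal (norm (indicator S s * D s)) \<partial>lborel) < \<infinity>" by simp
qed

lemma abs_integral_Beta_dominated_le:
  fixes D :: "real \<Rightarrow> real"
  assumes S: "S \<subseteq> {0<..<t}" and t: "0 < t" and \<beta>: "0 \<le> \<beta>" "\<beta> < 1" and c: "0 \<le> c"
    and D: "\<And>s. s \<in> S \<Longrightarrow> \<bar>D s\<bar> \<le> c * ((t - s) powr (-1/2) * s powr (-\<beta>))"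
  shows "\<bar>\<integral>s. indicator S s * D s \<partial>lborel\<bar> \<le> c * (Beta (1 - \<beta>) (1/2) * t powr (1/2 - \<beta>))"
proof -
  have "ennreal \<bar>\<integral>s. indicator S s * D s \<partial>lborel\<bar> \<le> ennreal c * ennreal (Beta (1 - \<beta>) (1/2) * t powr (1/2 - \<beta>))"
    using ennreal_abs_integral_le nn_integral_Beta_dominated_le[OF S c D] nn_integral_Beta_scaled[OF \<beta> t]
    by (metis order_trans)
  then show ?thesis
    using c \<beta> by (simp add: ennreal_mult[symmetric] Beta_def)
qed

section \<open>The directional derivative of the heat kernel\<close>

definition heat_kernel_deriv :: "'a::euclidean_space \<Rightarrow> real \<Rightarrow> 'a \<Rightarrow> real" where
  "heat_kernel_deriv a \<tau> v = heat_kernel \<tau> v * (- (v \<bullet> a) / (2 * \<tau>))"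

lemma heat_kernel_measurable [measurable]:
  "(\<lambda>y. heat_kernel \<tau> (y::'a::euclidean_space)) \<in> borel_measurable borel"
  unfolding heat_kernel_def by measurable

lemma heat_kernel_has_derivative_along:
  fixes w a :: "'a::euclidean_space"
  assumes \<tau>: "0 < \<tau>"
  shows "((\<lambda>e. heat_kernel \<tau> (w + e *\<^sub>R a)) has_real_derivative heat_kernel_deriv a \<tau> (w + \<theta> *\<^sub>R a)) (at \<theta>)"
proof -
  define C where "C = (4 * pi * \<tau>) powr (- real DIM('a) / 2)"
  have sq: "(norm (w + e *\<^sub>R a))\<^sup>2 = (norm w)\<^sup>2 + 2 * e * (w \<bullet> a) + e\<^sup>2 * (norm a)\<^sup>2" for e
    unfolding power2_norm_eq_inner
    by (simp add: inner_add_left inner_add_right inner_commute power2_eq_square algebra_simps)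
  have eq: "(\<lambda>e. heat_kernel \<tau> (w + e *\<^sub>R a))
      = (\<lambda>e. C * exp (- ((norm w)\<^sup>2 + 2 * e * (w \<bullet> a) + e\<^sup>2 * (norm a)\<^sup>2) / (4 * \<tau>)))"
    by (simp add: heat_kernel_def C_def sq)
  have "((\<lambda>e. C * exp (- ((norm w)\<^sup>2 + 2 * e * (w \<bullet> a) + e\<^sup>2 * (norm a)\<^sup>2) / (4 * \<tau>))) has_real_derivative
       C * (exp (- ((norm w)\<^sup>2 + 2 * \<theta> * (w \<bullet> a) + \<theta>\<^sup>2 * (norm a)\<^sup>2) / (4 * \<tau>)) *
          (- (2 * (w \<bullet> a) + 2 * \<theta> * (norm a)\<^sup>2) / (4 * \<tau>)))) (at \<theta>)"
    using \<tau> by (auto intro!: derivative_eq_intros simp: field_simps)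
  moreover have "(w + \<theta> *\<^sub>R a) \<bullet> a = w \<bullet> a + \<theta> * (norm a)\<^sup>2"
    by (simp add: inner_add_left power2_norm_eq_inner)
  then have "C * (exp (- ((norm w)\<^sup>2 + 2 * \<theta> * (w \<bullet> a) + \<theta>\<^sup>2 * (norm a)\<^sup>2) / (4 * \<tau>)) *
          (- (2 * (w \<bullet> a) + 2 * \<theta> * (norm a)\<^sup>2) / (4 * \<tau>))) = heat_kernel_deriv a \<tau> (w + \<theta> *\<^sub>R a)"
    using \<tau> by (simp add: heat_kernel_deriv_def heat_kernel_def C_def sq field_simps)
  ultimately show ?thesis unfolding eq by simp
qed

lemma mult_exp_neg_square_le:
  assumes "0 < \<tau>" "0 \<le> r"
  shows "r * exp (- r\<^sup>2 / (8 * \<tau>)) \<le> sqrt (2 * \<tau>)"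
proof -
  define u where "u = r / sqrt (8 * \<tau>)"
  have s8: "sqrt (8 * \<tau>) = 2 * sqrt (2 * \<tau>)"
    using real_sqrt_mult[of 4 "2 * \<tau>"] by simp
  have pos: "0 < sqrt (2 * \<tau>)" using assms by simp
  have "2 * u \<le> 1 + u\<^sup>2" using sum_squares_bound[of u 1] by simp
  also have "\<dots> \<le> exp (u\<^sup>2)" by (rule exp_ge_add_one_self)
  also have "u\<^sup>2 = r\<^sup>2 / (8 * \<tau>)" using assms by (simp add: u_def power_divide)
  finally have "r / sqrt (2 * \<tau>) \<le> exp (r\<^sup>2 / (8 * \<tau>))"
    using pos by (simp add: u_def s8)
  then have "r \<le> sqrt (2 * \<tau>) * exp (r\<^sup>2 / (8 * \<tau>))"
    using pos by (simp add: divide_le_eq mult.commute)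
  then have "r * exp (- r\<^sup>2 / (8 * \<tau>)) \<le> sqrt (2 * \<tau>) * exp (r\<^sup>2 / (8 * \<tau>)) * exp (- r\<^sup>2 / (8 * \<tau>))"
    by (rule mult_right_mono) simp
  then show ?thesis by (simp add: mult.assoc exp_add[symmetric])
qed

lemma abs_heat_kernel_deriv_le:
  fixes a v :: "'a::euclidean_space"
  assumes \<tau>: "0 < \<tau>"
  shows "\<bar>heat_kernel_deriv a \<tau> v\<bar>
     \<le> norm a * ((4 * pi * \<tau>) powr (- real DIM('a) / 2) * sqrt (2 * \<tau>) / (2 * \<tau>)) * exp (- (norm v)\<^sup>2 / (8 * \<tau>))"
proof -
  define C where "C = (4 * pi * \<tau>) powr (- real DIM('a) / 2)"
  have C: "0 \<le> C" by (simp add: C_def)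
  have e: "exp (- (norm v)\<^sup>2 / (4 * \<tau>)) = exp (- (norm v)\<^sup>2 / (8 * \<tau>)) * exp (- (norm v)\<^sup>2 / (8 * \<tau>))"
    by (simp add: exp_add[symmetric])
  have "\<bar>heat_kernel_deriv a \<tau> v\<bar> = C * exp (- (norm v)\<^sup>2 / (4 * \<tau>)) * \<bar>v \<bullet> a\<bar> / (2 * \<tau>)"
    using \<tau> by (simp add: heat_kernel_deriv_def heat_kernel_def C_def abs_mult)
  also have "\<dots> \<le> C * exp (- (norm v)\<^sup>2 / (4 * \<tau>)) * (norm v * norm a) / (2 * \<tau>)"
    using \<tau> C by (intro divide_right_mono mult_left_mono Cauchy_Schwarz_ineq2) auto
  also have "\<dots> = (C * norm a / (2 * \<tau>)) * exp (- (norm v)\<^sup>2 / (8 * \<tau>)) * (norm v * exp (- (norm v)\<^sup>2 / (8 * \<tau>)))"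
    unfolding e by (simp add: field_simps)
  also have "\<dots> \<le> (C * norm a / (2 * \<tau>)) * exp (- (norm v)\<^sup>2 / (8 * \<tau>)) * sqrt (2 * \<tau>)"
    using \<tau> C by (intro mult_left_mono mult_exp_neg_square_le) auto
  finally show ?thesis by (simp add: C_def field_simps)
qed

lemma abs_heat_kernel_deriv_shift_le:
  fixes a w :: "'a::euclidean_space"
  assumes \<tau>: "0 < \<tau>" and \<theta>: "\<bar>\<theta>\<bar> \<le> 1"
  shows "\<bar>heat_kernel_deriv a \<tau> (w + \<theta> *\<^sub>R a)\<bar>
     \<le> norm a * ((4 * pi * \<tau>) powr (- real DIM('a) / 2) * sqrt (2 * \<tau>) / (2 * \<tau>))
        * exp ((norm a)\<^sup>2 / (8 * \<tau>)) * exp (- (norm w)\<^sup>2 / (16 * \<tau>))"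
proof -
  define C where "C = norm a * ((4 * pi * \<tau>) powr (- real DIM('a) / 2) * sqrt (2 * \<tau>) / (2 * \<tau>))"
  have C: "0 \<le> C" using \<tau> by (simp add: C_def)
  have "norm w \<le> norm (w + \<theta> *\<^sub>R a) + norm a"
    using norm_triangle_ineq4[of "w + \<theta> *\<^sub>R a" "\<theta> *\<^sub>R a"] \<theta> mult_left_le_one_le[of "norm a" "\<bar>\<theta>\<bar>"]
    by simp
  then have "(norm w)\<^sup>2 \<le> 2 * (norm (w + \<theta> *\<^sub>R a))\<^sup>2 + 2 * (norm a)\<^sup>2"
    by (smt (verit) norm_ge_zero power_mono sum_squares_bound power2_sum)
  then have "- (norm (w + \<theta> *\<^sub>R a))\<^sup>2 / (8 * \<tau>) \<le> (norm a)\<^sup>2 / (8 * \<tau>) + - (norm w)\<^sup>2 / (16 * \<tau>)"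
    using \<tau> by (simp add: field_simps)
  then have "exp (- (norm (w + \<theta> *\<^sub>R a))\<^sup>2 / (8 * \<tau>)) \<le> exp ((norm a)\<^sup>2 / (8 * \<tau>)) * exp (- (norm w)\<^sup>2 / (16 * \<tau>))"
    by (simp add: exp_add[symmetric])
  then have "C * exp (- (norm (w + \<theta> *\<^sub>R a))\<^sup>2 / (8 * \<tau>)) \<le> C * (exp ((norm a)\<^sup>2 / (8 * \<tau>)) * exp (- (norm w)\<^sup>2 / (16 * \<tau>)))"
    using C by (rule mult_left_mono)
  with abs_heat_kernel_deriv_le[OF \<tau>, of a "w + \<theta> *\<^sub>R a"] show ?thesis by (simp add: C_def mult.assoc)
qed

lemma integrable_heat_kernel_mult:
  fixes g :: "'a::euclidean_space \<Rightarrow> real"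
  assumes \<tau>: "0 < \<tau>" and gm: "g \<in> borel_measurable lborel" and gb: "\<And>y. \<bar>g y\<bar> \<le> B"
  shows "integrable lborel (\<lambda>y. heat_kernel \<tau> (z - y) * g y)"
proof (rule Bochner_Integration.integrable_bound)
  define C where "C = (4 * pi * \<tau>) powr (- real DIM('a) / 2)"
  show "integrable lborel (\<lambda>y. C * B * exp (- (1 / (4 * \<tau>)) * (norm (y - z))\<^sup>2))"
    using \<tau> by (intro integrable_mult_right integrable_gaussian) auto
  show "(\<lambda>y. heat_kernel \<tau> (z - y) * g y) \<in> borel_measurable lborel" using gm by measurable
  have "\<bar>heat_kernel \<tau> (z - y) * g y\<bar> \<le> C * B * exp (- (1 / (4 * \<tau>)) * (norm (y - z))\<^sup>2)" for y
    using gb[of y] mult_left_mono[OF gb[of y], of "heat_kernel \<tau> (z - y)"]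
    by (simp add: heat_kernel_def C_def abs_mult norm_minus_commute mult_ac)
  then show "AE y in lborel. norm (heat_kernel \<tau> (z - y) * g y) \<le> norm (C * B * exp (- (1 / (4 * \<tau>)) * (norm (y - z))\<^sup>2))"
    using gb[of 0] by (intro AE_I2) (simp add: C_def)
qed

lemma integrable_heat_kernel_deriv_mult:
  fixes g :: "'a::euclidean_space \<Rightarrow> real"
  assumes \<tau>: "0 < \<tau>" and gm: "g \<in> borel_measurable lborel" and gb: "\<And>y. \<bar>g y\<bar> \<le> B"
  shows "integrable lborel (\<lambda>y. heat_kernel_deriv a \<tau> (x - y) * g y)"
proof (rule Bochner_Integration.integrable_bound)
  define C where "C = norm a * ((4 * pi * \<tau>) powr (- real DIM('a) / 2) * sqrt (2 * \<tau>) / (2 * \<tau>))"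
  have C: "0 \<le> C" using \<tau> by (simp add: C_def)
  show "integrable lborel (\<lambda>y. C * B * exp (- (1 / (8 * \<tau>)) * (norm (y - x))\<^sup>2))"
    using \<tau> by (intro integrable_mult_right integrable_gaussian) auto
  show "(\<lambda>y. heat_kernel_deriv a \<tau> (x - y) * g y) \<in> borel_measurable lborel"
    using gm unfolding heat_kernel_deriv_def by measurable
  have "\<bar>heat_kernel_deriv a \<tau> (x - y)\<bar> * \<bar>g y\<bar> \<le> C * exp (- (1 / (8 * \<tau>)) * (norm (y - x))\<^sup>2) * B" for y
    using abs_heat_kernel_deriv_le[OF \<tau>, of a "x - y"] gb[of y] C
    by (intro mult_mono) (auto simp: C_def norm_minus_commute)
  then show "AE y in lborel. norm (heat_kernel_deriv a \<tau> (x - y) * g y)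
      \<le> norm (C * B * exp (- (1 / (8 * \<tau>)) * (norm (y - x))\<^sup>2))"
    using C gb[of 0] by (intro AE_I2) (simp add: abs_mult mult_ac)
qed

lemma abs_heat_kernel_difference_quotient_le:
  fixes a w :: "'a::euclidean_space"
  assumes \<tau>: "0 < \<tau>" and e: "\<bar>e\<bar> \<le> 1" "e \<noteq> 0"
  shows "\<bar>(heat_kernel \<tau> (w + e *\<^sub>R a) - heat_kernel \<tau> w) / e\<bar>
     \<le> norm a * ((4 * pi * \<tau>) powr (- real DIM('a) / 2) * sqrt (2 * \<tau>) / (2 * \<tau>))
        * exp ((norm a)\<^sup>2 / (8 * \<tau>)) * exp (- (norm w)\<^sup>2 / (16 * \<tau>))"
proof -
  let ?h = "\<lambda>e. heat_kernel \<tau> (w + e *\<^sub>R a)"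
  let ?C = "norm a * ((4 * pi * \<tau>) powr (- real DIM('a) / 2) * sqrt (2 * \<tau>) / (2 * \<tau>))
        * exp ((norm a)\<^sup>2 / (8 * \<tau>)) * exp (- (norm w)\<^sup>2 / (16 * \<tau>))"
  have "norm (?h e - ?h 0) \<le> ?C * norm (e - 0)"
  proof (rule field_differentiable_bound[where S="{-1..1}"])
    show "(?h has_field_derivative heat_kernel_deriv a \<tau> (w + \<theta> *\<^sub>R a)) (at \<theta> within {-1..1})" for \<theta>
      by (rule has_field_derivative_at_within, rule heat_kernel_has_derivative_along[OF \<tau>])
    show "norm (heat_kernel_deriv a \<tau> (w + \<theta> *\<^sub>R a)) \<le> ?C" if "\<theta> \<in> {-1..1}" for \<theta>
      using abs_heat_kernel_deriv_shift_le[OF \<tau>, of \<theta> a w] that by (simp add: abs_le_iff)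
  qed (use e in auto)
  then show ?thesis using e by (simp add: divide_le_eq abs_divide)
qed

text \<open>Differentiation under the integral sign: the difference quotients of the heat kernel
  along a are dominated by a Gaussian, by the mean value theorem and the shifted bound above.\<close>

lemma heat_has_derivative_along:
  fixes g :: "'a::euclidean_space \<Rightarrow> real" and a x :: 'a
  assumes \<tau>: "0 < \<tau>" and gm: "g \<in> borel_measurable lborel" and gb: "\<And>y. \<bar>g y\<bar> \<le> B"
  shows "((\<lambda>e. heat \<tau> g (x + e *\<^sub>R a)) has_real_derivative (\<integral>y. heat_kernel_deriv a \<tau> (x - y) * g y \<partial>lborel)) (at 0)"
proof -
  define C where "C = norm a * ((4 * pi * \<tau>) powr (- real DIM('a) / 2) * sqrt (2 * \<tau>) / (2 * \<tau>))
            * exp ((norm a)\<^sup>2 / (8 * \<tau>))"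
  have C: "0 \<le> C" using \<tau> by (simp add: C_def)
  define F where "F e = heat \<tau> g (x + e *\<^sub>R a)" for e
  let ?h = "\<lambda>y e. heat_kernel \<tau> ((x - y) + e *\<^sub>R a)"
  define q where "q e y = (?h y e - ?h y 0) / e * g y" for e y
  have quotient: "(F e - F 0) / e = (\<integral>y. q e y \<partial>lborel)" for e
  proof -
    have "(\<integral>y. q e y \<partial>lborel) = (\<integral>y. heat_kernel \<tau> (x + e *\<^sub>R a - y) * g y - heat_kernel \<tau> (x - y) * g y \<partial>lborel) / e"
      by (simp add: q_def field_simps algebra_simps)
    also have "\<dots> = (F e - F 0) / e"
      using integrable_heat_kernel_mult[OF \<tau> gm gb] by (simp add: F_def heat_def)
    finally show ?thesis by simp
  qed
  have lim: "(\<lambda>i. q (X i) y) \<longlonglongrightarrow> heat_kernel_deriv a \<tau> (x - y) * g y"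
    if "\<forall>i. X i \<in> UNIV - {0}" "X \<longlonglongrightarrow> 0" for X y
  proof -
    have "((\<lambda>e. (?h y (0 + e) - ?h y 0) / e) \<longlongrightarrow> heat_kernel_deriv a \<tau> (x - y)) (at 0)"
      using heat_kernel_has_derivative_along[OF \<tau>, of "x - y" a 0] unfolding DERIV_def by simp
    then have "(\<lambda>i. (?h y (X i) - ?h y 0) / X i) \<longlonglongrightarrow> heat_kernel_deriv a \<tau> (x - y)"
      using that unfolding tendsto_at_iff_sequentially by (simp add: o_def)
    then show ?thesis unfolding q_def by (rule tendsto_mult_right)
  qed
  have dom: "\<bar>q e y\<bar> \<le> C * B * exp (- (1 / (16 * \<tau>)) * (norm (y - x))\<^sup>2)" if e: "\<bar>e\<bar> \<le> 1" "e \<noteq> 0" for e y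
  proof -
    have "\<bar>(?h y e - ?h y 0) / e\<bar> \<le> C * exp (- (norm (x - y))\<^sup>2 / (16 * \<tau>))"
      using abs_heat_kernel_difference_quotient_le[OF \<tau> e, of "x - y" a] by (simp add: C_def)
    then have "\<bar>(?h y e - ?h y 0) / e\<bar> * \<bar>g y\<bar> \<le> C * exp (- (norm (x - y))\<^sup>2 / (16 * \<tau>)) * B"
      using gb[of y] C by (intro mult_mono) auto
    then show ?thesis by (simp add: q_def abs_mult norm_minus_commute mult_ac)
  qed
  show ?thesis
    unfolding F_def[symmetric] DERIV_def tendsto_at_iff_sequentially
  proof (intro allI impI)
    fix X :: "nat \<Rightarrow> real"
    assume X0: "\<forall>i. X i \<in> UNIV - {0}" and Xl: "X \<longlonglongrightarrow> 0"
    obtain N where N: "\<And>i. N \<le> i \<Longrightarrow> \<bar>X i\<bar> \<le> 1"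
      using Xl[THEN tendstoD, of 1] by (force simp: eventually_sequentially dist_real_def)
    have "(\<lambda>i. \<integral>y. q (X (i + N)) y \<partial>lborel) \<longlonglongrightarrow> (\<integral>y. heat_kernel_deriv a \<tau> (x - y) * g y \<partial>lborel)"
    proof (rule integral_dominated_convergence[where w="\<lambda>y. C * B * exp (- (1 / (16 * \<tau>)) * (norm (y - x))\<^sup>2)"])
      show "integrable lborel (\<lambda>y. C * B * exp (- (1 / (16 * \<tau>)) * (norm (y - x))\<^sup>2))"
        using \<tau> by (intro integrable_mult_right integrable_gaussian) auto
      show "AE y in lborel. (\<lambda>i. q (X (i + N)) y) \<longlonglongrightarrow> heat_kernel_deriv a \<tau> (x - y) * g y"
        using lim[OF X0 Xl] by (intro AE_I2 LIMSEQ_ignore_initial_segment)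
      show "AE y in lborel. norm (q (X (i + N)) y) \<le> C * B * exp (- (1 / (16 * \<tau>)) * (norm (y - x))\<^sup>2)" for i
        using dom[of "X (i + N)"] N[of "i + N"] X0 by (intro AE_I2) auto
    qed (use gm in \<open>auto simp: q_def heat_kernel_deriv_def\<close>)
    then have "(\<lambda>i. \<integral>y. q (X i) y \<partial>lborel) \<longlonglongrightarrow> (\<integral>y. heat_kernel_deriv a \<tau> (x - y) * g y \<partial>lborel)"
      by (rule LIMSEQ_offset)
    then show "((\<lambda>h. (F (0 + h) - F 0) / h) \<circ> X) \<longlonglongrightarrow> (\<integral>y. heat_kernel_deriv a \<tau> (x - y) * g y \<partial>lborel)"
      by (simp add: o_def quotient)
  qed
qed

lemma dir_deriv_heat:
  fixes g :: "'a::euclidean_space \<Rightarrow> real"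
  assumes "0 < \<tau>" and "g \<in> borel_measurable lborel" and "\<And>y. \<bar>g y\<bar> \<le> B"
  shows "dir_deriv a (heat \<tau> g) x = (\<integral>y. heat_kernel_deriv a \<tau> (x - y) * g y \<partial>lborel)"
  unfolding dir_deriv_def using heat_has_derivative_along[OF assms] by (rule DERIV_imp_deriv)

section \<open>Gaussian convolution bounds\<close>

text \<open>Up to a constant factor this is G_{2t}; the doubled variance absorbs the factor |x|/t
  coming from the gradient of G_t.\<close>

definition heat_profile :: "real \<Rightarrow> 'a::euclidean_space \<Rightarrow> real" where
  "heat_profile t x = t powr (- real DIM('a) / 2) * exp (- (norm x)\<^sup>2 / (8 * t))"

lemma heat_profile_nonneg: "0 \<le> heat_profile t x"
  by (simp add: heat_profile_def)

lemma heat_profile_powr: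
  assumes "0 < t"
  shows "heat_profile t (y::'a::euclidean_space) powr r = t powr (- real DIM('a) * r / 2) * exp (- (r / (8 * t)) * (norm y)\<^sup>2)"
  using assms by (simp add: heat_profile_def powr_mult powr_powr exp_powr_real mult_ac)

lemma heat_kernel_le_heat_profile:
  assumes "0 < t"
  shows "heat_kernel t x \<le> (4 * pi) powr (- real DIM('a) / 2) * heat_profile t (x::'a::euclidean_space)"
proof -
  have "heat_kernel t x = (4 * pi) powr (- real DIM('a) / 2) * t powr (- real DIM('a) / 2) * exp (- (norm x)\<^sup>2 / (4 * t))"
    using assms by (simp add: heat_kernel_def powr_mult)
  also have "\<dots> \<le> (4 * pi) powr (- real DIM('a) / 2) * t powr (- real DIM('a) / 2) * exp (- (norm x)\<^sup>2 / (8 * t))"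
    using assms by (intro mult_left_mono) (auto simp: divide_simps)
  finally show ?thesis by (simp add: heat_profile_def mult_ac)
qed

lemma abs_integral_heat_kernel_deriv_mult_gaussian_le:
  fixes w :: "'a::euclidean_space \<Rightarrow> real" and a x :: 'a
  assumes \<tau>: "0 < \<tau>" and s: "0 < s" and p: "0 < p" and B: "0 \<le> B"
    and w: "\<And>y. \<bar>w y\<bar> \<le> B * heat_profile s y powr p"
  shows "\<bar>\<integral>y. heat_kernel_deriv a \<tau> (x - y) * w y \<partial>lborel\<bar>
     \<le> B * gaussian_mass TYPE('a) * norm a
        * ((4 * pi * \<tau>) powr (- real DIM('a) / 2) * (sqrt (2 * \<tau>) / (2 * \<tau>)) * s powr (- real DIM('a) * p / 2)
           * (1 / (8 * \<tau>) + p / (8 * s)) powr (- real DIM('a) / 2))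
        * exp (- (p / (8 * (s + p * \<tau>))) * (norm x)\<^sup>2)"
proof -
  define \<alpha> where "\<alpha> = 1 / (8 * \<tau>)"
  define \<beta> where "\<beta> = p / (8 * s)"
  define C where "C = norm a * ((4 * pi * \<tau>) powr (- real DIM('a) / 2) * sqrt (2 * \<tau>) / (2 * \<tau>))
    * B * s powr (- real DIM('a) * p / 2)"
  have \<alpha>: "0 < \<alpha>" and \<beta>: "0 < \<beta>" and C: "0 \<le> C"
    using \<tau> s p B by (simp_all add: \<alpha>_def \<beta>_def C_def)
  have pointwise: "\<bar>heat_kernel_deriv a \<tau> (x - y) * w y\<bar> \<le> C * (exp (- \<alpha> * (norm (x - y))\<^sup>2) * exp (- \<beta> * (norm y)\<^sup>2))" for y
  proof -
    have "\<bar>w y\<bar> \<le> B * s powr (- real DIM('a) * p / 2) * exp (- \<beta> * (norm y)\<^sup>2)"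
      using w[of y] s by (simp add: heat_profile_powr \<beta>_def mult_ac)
    with abs_heat_kernel_deriv_le[OF \<tau>, of a "x - y"] B
    have "\<bar>heat_kernel_deriv a \<tau> (x - y)\<bar> * \<bar>w y\<bar>
        \<le> (norm a * ((4 * pi * \<tau>) powr (- real DIM('a) / 2) * sqrt (2 * \<tau>) / (2 * \<tau>)) * exp (- \<alpha> * (norm (x - y))\<^sup>2))
          * (B * s powr (- real DIM('a) * p / 2) * exp (- \<beta> * (norm y)\<^sup>2))"
      using \<tau> by (intro mult_mono) (auto simp: \<alpha>_def)
    then show ?thesis by (simp add: C_def abs_mult mult_ac)
  qed
  have "ennreal \<bar>\<integral>y. heat_kernel_deriv a \<tau> (x - y) * w y \<partial>lborel\<bar>
      \<le> (\<integral>\<^sup>+y. ennreal C * ennreal (exp (- \<alpha> * (norm (x - y))\<^sup>2) * exp (- \<beta> * (norm y)\<^sup>2)) \<partial>lborel)"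
    using ennreal_abs_integral_le
  proof (rule order_trans)
    show "(\<integral>\<^sup>+y. ennreal \<bar>heat_kernel_deriv a \<tau> (x - y) * w y\<bar> \<partial>lborel)
        \<le> (\<integral>\<^sup>+y. ennreal C * ennreal (exp (- \<alpha> * (norm (x - y))\<^sup>2) * exp (- \<beta> * (norm y)\<^sup>2)) \<partial>lborel)"
      using pointwise C by (intro nn_integral_mono) (simp add: ennreal_mult[symmetric] ennreal_leI)
  qed
  also have "\<dots> = ennreal (C * (exp (- (p / (8 * (s + p * \<tau>))) * (norm x)\<^sup>2) * (\<alpha> + \<beta>) powr (- real DIM('a) / 2)
                * gaussian_mass TYPE('a)))"
  proof -
    have "\<alpha> * \<beta> / (\<alpha> + \<beta>) = p / (8 * (s + p * \<tau>))"
      using \<tau> s p by (simp add: \<alpha>_def \<beta>_def field_simps)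
    then show ?thesis
      using C by (subst nn_integral_cmult, measurable)
        (simp only: nn_integral_gaussian_product[OF \<alpha> \<beta>], simp add: ennreal_mult gaussian_mass_nonneg)
  qed
  finally have "\<bar>\<integral>y. heat_kernel_deriv a \<tau> (x - y) * w y \<partial>lborel\<bar>
      \<le> C * (exp (- (p / (8 * (s + p * \<tau>))) * (norm x)\<^sup>2) * (\<alpha> + \<beta>) powr (- real DIM('a) / 2) * gaussian_mass TYPE('a))"
    using C gaussian_mass_nonneg[where 'a='a] by (subst (asm) ennreal_le_iff) auto
  then show ?thesis by (simp add: C_def \<alpha>_def \<beta>_def mult_ac)
qed

lemma heat_kernel_deriv_convolution_constant:
  fixes n p \<tau> s :: real
  assumes \<tau>: "0 < \<tau>" and s: "0 < s" and p: "0 < p"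
  shows "(4 * pi * \<tau>) powr (- n / 2) * (sqrt (2 * \<tau>) / (2 * \<tau>)) * s powr (- n * p / 2)
          * (1 / (8 * \<tau>) + p / (8 * s)) powr (- n / 2)
     = (4 * pi) powr (- n / 2) * 8 powr (n / 2) / sqrt 2 * \<tau> powr (-1/2) * s powr (- n * (p - 1) / 2)
          * (s + p * \<tau>) powr (- n / 2)"
proof -
  have sum: "1 / (8 * \<tau>) + p / (8 * s) = (s + p * \<tau>) / (8 * \<tau> * s)"
    using \<tau> s by (simp add: field_simps)
  have "0 < s + p * \<tau>" using \<tau> s p by (simp add: add_pos_pos)
  moreover have "sqrt (2 * \<tau>) / (2 * \<tau>) = (2 * \<tau>) powr (-1/2)"
  proof -
    have "sqrt (2 * \<tau>) = (2 * \<tau>) powr (1/2)" using \<tau> by (simp add: powr_half_sqrt)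
    then have "sqrt (2 * \<tau>) / (2 * \<tau>) = (2 * \<tau>) powr (1/2) / (2 * \<tau>) powr 1" using \<tau> by simp
    also have "\<dots> = (2 * \<tau>) powr (1/2 - 1)" by (rule powr_diff[symmetric])
    finally show ?thesis by simp
  qed
  moreover have "ln (8::real) = 3 * ln 2" "ln (4::real) = 2 * ln 2"
    using ln_realpow[of 2 3] ln_realpow[of 2 2] by simp_all
  ultimately show ?thesis
    unfolding sum using \<tau> s
    by (simp add: powr_def powr_half_sqrt[symmetric] ln_mult ln_div exp_add[symmetric] exp_diff[symmetric] algebra_simps)
      (simp add: field_simps)
qed

definition conv_const :: "'a::euclidean_space itself \<Rightarrow> real" where
  "conv_const _ = (4 * pi) powr (- real DIM('a) / 2) * 8 powr (real DIM('a) / 2) / sqrt 2 * gaussian_mass TYPE('a)"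

lemma conv_const_nonneg: "0 \<le> conv_const TYPE('a::euclidean_space)"
  by (simp add: conv_const_def gaussian_mass_nonneg)

lemma abs_integral_heat_kernel_deriv_mult_le:
  fixes w :: "'a::euclidean_space \<Rightarrow> real" and a x :: 'a
  assumes \<tau>: "0 < \<tau>" and s: "0 < s" and p: "1 \<le> p" and B: "0 \<le> B"
    and w: "\<And>y. \<bar>w y\<bar> \<le> B * heat_profile s y powr p"
  shows "\<bar>\<integral>y. heat_kernel_deriv a \<tau> (x - y) * w y \<partial>lborel\<bar>
     \<le> conv_const TYPE('a) * norm a * B * \<tau> powr (-1/2) * s powr (- real DIM('a) * (p - 1) / 2) * heat_profile (\<tau> + s) x"
proof -
  define n where "n = real DIM('a)"
  define C where "C = B * gaussian_mass TYPE('a) * norm a * ((4 * pi) powr (- n / 2) * 8 powr (n / 2) / sqrt 2)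
      * \<tau> powr (-1/2) * s powr (- n * (p - 1) / 2)"
  have C: "0 \<le> C" using B by (simp add: C_def gaussian_mass_nonneg)
  have "(s + p * \<tau>) powr (- n / 2) \<le> (\<tau> + s) powr (- n / 2)"
    using \<tau> s p by (intro powr_mono2') (auto simp: n_def intro: add_pos_pos)
  moreover have "exp (- (p / (8 * (s + p * \<tau>))) * (norm x)\<^sup>2) \<le> exp (- (norm x)\<^sup>2 / (8 * (\<tau> + s)))"
  proof -
    have "1 / (8 * (\<tau> + s)) = p / (8 * (p * (\<tau> + s)))" using p by simp
    also have "\<dots> \<le> p / (8 * (s + p * \<tau>))"
      using p \<tau> s mult_right_mono[OF p, of s]
      by (intro divide_left_mono) (auto simp: algebra_simps intro!: mult_pos_pos add_pos_pos)
    finally have "1 / (8 * (\<tau> + s)) * (norm x)\<^sup>2 \<le> p / (8 * (s + p * \<tau>)) * (norm x)\<^sup>2"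
      by (rule mult_right_mono) simp
    then show ?thesis by simp
  qed
  ultimately have bound: "C * ((s + p * \<tau>) powr (- n / 2) * exp (- (p / (8 * (s + p * \<tau>))) * (norm x)\<^sup>2))
      \<le> C * heat_profile (\<tau> + s) x"
    using C by (intro mult_left_mono) (auto simp: heat_profile_def n_def intro!: mult_mono)
  have "\<bar>\<integral>y. heat_kernel_deriv a \<tau> (x - y) * w y \<partial>lborel\<bar>
     \<le> B * gaussian_mass TYPE('a) * norm a
        * ((4 * pi * \<tau>) powr (- n / 2) * (sqrt (2 * \<tau>) / (2 * \<tau>)) * s powr (- n * p / 2)
           * (1 / (8 * \<tau>) + p / (8 * s)) powr (- n / 2))
        * exp (- (p / (8 * (s + p * \<tau>))) * (norm x)\<^sup>2)"
    using abs_integral_heat_kernel_deriv_mult_gaussian_le[OF \<tau> s _ B w] p by (simp add: n_def)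
  also have "\<dots> = C * ((s + p * \<tau>) powr (- n / 2) * exp (- (p / (8 * (s + p * \<tau>))) * (norm x)\<^sup>2))"
  proof -
    have "0 < p" using p by simp
    show ?thesis
      unfolding heat_kernel_deriv_convolution_constant[where n=n, OF \<tau> s \<open>0 < p\<close>] by (simp add: C_def mult_ac)
  qed
  also note bound
  finally show ?thesis by (simp add: C_def conv_const_def n_def mult_ac)
qed

section \<open>Duhamel terms of a power-type nonlinearity\<close>

locale power_nonlinearity =
  fixes f :: "real \<Rightarrow> real" and L p :: real
  assumes continuous_f: "continuous_on UNIV f"
    and f_lipschitz: "\<And>\<xi> \<eta>. \<bar>f \<xi> - f \<eta>\<bar> \<le> L * (\<bar>\<xi>\<bar> powr (p - 1) + \<bar>\<eta>\<bar> powr (p - 1)) * \<bar>\<xi> - \<eta>\<bar>"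
    and L_nonneg: "0 \<le> L" and f_zero: "f 0 = 0" and p_gt_1: "1 < p"
begin

lemma f_measurable [measurable]: "f \<in> borel_measurable borel"
  using continuous_f by (rule borel_measurable_continuous_onI)

lemma powr_pred_mult: "0 \<le> (x::real) \<Longrightarrow> x powr (p - 1) * x = x powr p"
  using p_gt_1 by (cases "x = 0") (simp_all add: powr_mult_base mult.commute)

lemma abs_f_le: "\<bar>f \<xi>\<bar> \<le> L * \<bar>\<xi>\<bar> powr p"
  using f_lipschitz[of \<xi> 0] p_gt_1 powr_pred_mult[of "\<bar>\<xi>\<bar>"] by (simp add: f_zero mult.assoc)

lemma abs_f_le_weight:
  assumes m: "0 \<le> m" and u: "\<bar>u\<bar> \<le> m * w"
  shows "\<bar>f u\<bar> \<le> L * m powr p * w powr p"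
proof -
  have "\<bar>f u\<bar> \<le> L * \<bar>u\<bar> powr p" by (rule abs_f_le)
  also have "\<dots> \<le> L * (m * w) powr p"
    using u p_gt_1 L_nonneg by (intro mult_left_mono powr_mono2) auto
  also have "\<dots> = L * m powr p * w powr p"
    using m u by (simp add: powr_mult)
  finally show ?thesis .
qed

lemma abs_f_diff_le_weight:
  assumes m: "0 \<le> m" and w: "0 \<le> w"
    and u1: "\<bar>u1\<bar> \<le> m * w" and u2: "\<bar>u2\<bar> \<le> m * w" and d: "\<bar>u1 - u2\<bar> \<le> d * w"
  shows "\<bar>f u1 - f u2\<bar> \<le> 2 * L * m powr (p - 1) * d * w powr p"
proof -
  have "\<bar>u1\<bar> powr (p - 1) + \<bar>u2\<bar> powr (p - 1) \<le> 2 * (m * w) powr (p - 1)"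
    using u1 u2 p_gt_1 powr_mono2[of "p - 1" "\<bar>u1\<bar>" "m * w"] powr_mono2[of "p - 1" "\<bar>u2\<bar>" "m * w"] by simp
  then have "L * (\<bar>u1\<bar> powr (p - 1) + \<bar>u2\<bar> powr (p - 1)) * \<bar>u1 - u2\<bar> \<le> L * (2 * (m * w) powr (p - 1)) * (d * w)"
    using d L_nonneg by (intro mult_mono mult_left_mono) auto
  with f_lipschitz[of u1 u2] have "\<bar>f u1 - f u2\<bar> \<le> L * (2 * (m * w) powr (p - 1)) * (d * w)"
    by linarith
  also have "\<dots> = 2 * L * m powr (p - 1) * d * (w powr (p - 1) * w)"
    using m w by (simp add: powr_mult mult_ac)
  finally show ?thesis using w by (simp add: powr_pred_mult)
qed

lemma abs_f_comp_le_const: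
  assumes s: "0 < s" and m: "0 \<le> m" and U: "\<bar>u\<bar> \<le> m * heat_profile s (y::'a::euclidean_space)"
  shows "\<bar>f u\<bar> \<le> L * m powr p * s powr (- real DIM('a) * p / 2)"
proof -
  have "\<bar>f u\<bar> \<le> L * m powr p * heat_profile s y powr p"
    by (rule abs_f_le_weight[OF m U])
  also have "heat_profile s y powr p \<le> s powr (- real DIM('a) * p / 2)"
    using s p_gt_1 by (simp add: heat_profile_powr mult_left_le)
  finally show ?thesis using L_nonneg by (simp add: mult_left_mono)
qed

lemma dir_deriv_heat_comp:
  fixes U :: "'a::euclidean_space \<Rightarrow> real"
  assumes \<tau>: "0 < \<tau>" and s: "0 < s" and m: "0 \<le> m"
    and Um: "U \<in> borel_measurable lborel" and U: "\<And>y. \<bar>U y\<bar> \<le> m * heat_profile s y"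
  shows "dir_deriv a (heat \<tau> (\<lambda>y. f (U y))) x = (\<integral>y. heat_kernel_deriv a \<tau> (x - y) * f (U y) \<partial>lborel)"
proof (rule dir_deriv_heat[OF \<tau>])
  show "(\<lambda>y. f (U y)) \<in> borel_measurable lborel" using Um by measurable
qed (rule abs_f_comp_le_const[OF s m U])

lemma abs_dir_deriv_heat_comp_le:
  fixes U :: "'a::euclidean_space \<Rightarrow> real"
  assumes \<tau>: "0 < \<tau>" and s: "0 < s" and m: "0 \<le> m"
    and Um: "U \<in> borel_measurable lborel" and U: "\<And>y. \<bar>U y\<bar> \<le> m * heat_profile s y"
  shows "\<bar>dir_deriv a (heat \<tau> (\<lambda>y. f (U y))) x\<bar>
     \<le> conv_const TYPE('a) * norm a * (L * m powr p) * \<tau> powr (-1/2) * s powr (- real DIM('a) * (p - 1) / 2)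
        * heat_profile (\<tau> + s) x"
  unfolding dir_deriv_heat_comp[OF \<tau> s m Um U]
  using p_gt_1 L_nonneg abs_f_le_weight[OF m U]
  by (intro abs_integral_heat_kernel_deriv_mult_le[OF \<tau> s]) (auto simp: mult_ac)

lemma abs_dir_deriv_heat_comp_diff_le:
  fixes U1 U2 :: "'a::euclidean_space \<Rightarrow> real"
  assumes \<tau>: "0 < \<tau>" and s: "0 < s" and m: "0 \<le> m" and d: "0 \<le> d"
    and U1m: "U1 \<in> borel_measurable lborel" and U1: "\<And>y. \<bar>U1 y\<bar> \<le> m * heat_profile s y"
    and U2m: "U2 \<in> borel_measurable lborel" and U2: "\<And>y. \<bar>U2 y\<bar> \<le> m * heat_profile s y"
    and D: "\<And>y. \<bar>U1 y - U2 y\<bar> \<le> d * heat_profile s y"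
  shows "\<bar>dir_deriv a (heat \<tau> (\<lambda>y. f (U1 y))) x - dir_deriv a (heat \<tau> (\<lambda>y. f (U2 y))) x\<bar>
     \<le> conv_const TYPE('a) * norm a * (2 * L * m powr (p - 1) * d) * \<tau> powr (-1/2)
        * s powr (- real DIM('a) * (p - 1) / 2) * heat_profile (\<tau> + s) x"
proof -
  have "integrable lborel (\<lambda>y. heat_kernel_deriv a \<tau> (x - y) * f (U y))"
    if "U \<in> borel_measurable lborel" "\<And>y. \<bar>U y\<bar> \<le> m * heat_profile s y" for U
    using that abs_f_comp_le_const[OF s m] by (intro integrable_heat_kernel_deriv_mult[OF \<tau>]) auto
  then have "dir_deriv a (heat \<tau> (\<lambda>y. f (U1 y))) x - dir_deriv a (heat \<tau> (\<lambda>y. f (U2 y))) x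
      = (\<integral>y. heat_kernel_deriv a \<tau> (x - y) * (f (U1 y) - f (U2 y)) \<partial>lborel)"
    unfolding dir_deriv_heat_comp[OF \<tau> s m U1m U1] dir_deriv_heat_comp[OF \<tau> s m U2m U2]
    using U1m U1 U2m U2 by (simp add: right_diff_distrib)
  also have "\<bar>\<dots>\<bar> \<le> conv_const TYPE('a) * norm a * (2 * L * m powr (p - 1) * d) * \<tau> powr (-1/2)
        * s powr (- real DIM('a) * (p - 1) / 2) * heat_profile (\<tau> + s) x"
    using p_gt_1 L_nonneg m d abs_f_diff_le_weight[OF m heat_profile_nonneg U1 U2 D]
    by (intro abs_integral_heat_kernel_deriv_mult_le[OF \<tau> s]) auto
  finally show ?thesis .
qed

end

abbreviation time_space_measurable :: "(real \<Rightarrow> 'a::euclidean_space \<Rightarrow> real) \<Rightarrow> bool" where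
  "time_space_measurable U \<equiv> (\<lambda>z. U (fst z) (snd z)) \<in> borel_measurable (lborel \<Otimes>\<^sub>M lborel)"

lemma time_space_measurable_section:
  assumes [measurable]: "time_space_measurable (U :: real \<Rightarrow> 'a::euclidean_space \<Rightarrow> real)"
  shows "U s \<in> borel_measurable lborel"
proof -
  have "(\<lambda>y. (\<lambda>z. U (fst z) (snd z)) (s, y)) \<in> borel_measurable lborel" by measurable
  then show ?thesis by simp
qed

lemma duhamel_cong:
  assumes "\<And>s. s \<in> S \<Longrightarrow> U s = U' s"
  shows "duhamel a f U S t x = duhamel a f U' S t x"
  unfolding duhamel_def set_lebesgue_integral_def
  by (intro Bochner_Integration.integral_cong) (auto simp: assms indicator_def)

context power_nonlinearity
begin

lemma abs_duhamel_integrand_le: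
  fixes U :: "real \<Rightarrow> 'a::euclidean_space \<Rightarrow> real"
  assumes s: "0 < s" "s < t" and m: "0 \<le> m"
    and Um: "U s \<in> borel_measurable lborel" and U: "\<And>y. \<bar>U s y\<bar> \<le> m * heat_profile s y"
  shows "\<bar>dir_deriv a (heat (t - s) (\<lambda>y. f (U s y))) x\<bar>
     \<le> conv_const TYPE('a) * norm a * (L * m powr p) * heat_profile t x
        * ((t - s) powr (-1/2) * s powr (- (real DIM('a) * (p - 1) / 2)))"
  using abs_dir_deriv_heat_comp_le[of "t - s" s m "U s" a x] s m Um U by (simp add: mult_ac)

lemma abs_duhamel_le:
  fixes U :: "real \<Rightarrow> 'a::euclidean_space \<Rightarrow> real"
  assumes S: "S \<subseteq> {0<..<t}" and t: "0 < t" and m: "0 \<le> m"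
    and \<sigma>: "real DIM('a) * (p - 1) / 2 < 1"
    and Um: "\<And>s. s \<in> S \<Longrightarrow> U s \<in> borel_measurable lborel"
    and U: "\<And>s y. s \<in> S \<Longrightarrow> \<bar>U s y\<bar> \<le> m * heat_profile s y"
  shows "\<bar>duhamel a f U S t x\<bar> \<le> conv_const TYPE('a) * norm a * (L * m powr p) * heat_profile t x
           * (Beta (1 - real DIM('a) * (p - 1) / 2) (1/2) * t powr (1/2 - real DIM('a) * (p - 1) / 2))"
  unfolding duhamel_def set_lebesgue_integral_def real_scaleR_def
proof (rule abs_integral_Beta_dominated_le[OF S t])
  show "0 \<le> real DIM('a) * (p - 1) / 2" using p_gt_1 by simp
  show "0 \<le> conv_const TYPE('a) * norm a * (L * m powr p) * heat_profile t x"
    using L_nonneg by (intro mult_nonneg_nonneg conv_const_nonneg heat_profile_nonneg) auto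
  show "real DIM('a) * (p - 1) / 2 < 1" by (rule \<sigma>)
  fix s assume "s \<in> S"
  with S show "\<bar>dir_deriv a (heat (t - s) (\<lambda>y. f (U s y))) x\<bar>
      \<le> conv_const TYPE('a) * norm a * (L * m powr p) * heat_profile t x
        * ((t - s) powr (-1/2) * s powr (- (real DIM('a) * (p - 1) / 2)))"
    by (intro abs_duhamel_integrand_le[OF _ _ m Um U]) auto
qed

lemma integrable_duhamel_integrand:
  fixes U :: "real \<Rightarrow> 'a::euclidean_space \<Rightarrow> real"
  assumes S: "S \<subseteq> {0<..<t}" and [measurable]: "S \<in> sets borel" and t: "0 < t" and m: "0 \<le> m"
    and \<sigma>: "real DIM('a) * (p - 1) / 2 < 1"
    and [measurable]: "time_space_measurable U"
    and U: "\<And>s y. s \<in> S \<Longrightarrow> \<bar>U s y\<bar> \<le> m * heat_profile s y"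
  shows "integrable lborel (\<lambda>s. indicator S s * dir_deriv a (heat (t - s) (\<lambda>y. f (U s y))) x)"
proof (rule integrable_Beta_dominated[OF S t])
  show "0 \<le> real DIM('a) * (p - 1) / 2" using p_gt_1 by simp
  show "0 \<le> conv_const TYPE('a) * norm a * (L * m powr p) * heat_profile t x"
    using L_nonneg by (intro mult_nonneg_nonneg conv_const_nonneg heat_profile_nonneg) auto
  have "(\<lambda>s. indicator S s * dir_deriv a (heat (t - s) (\<lambda>y. f (U s y))) x)
      = (\<lambda>s. indicator S s * (\<integral>y. heat_kernel_deriv a (t - s) (x - y) * f (U s y) \<partial>lborel))"
  proof
    fix s show "indicator S s * dir_deriv a (heat (t - s) (\<lambda>y. f (U s y))) x
      = indicator S s * (\<integral>y. heat_kernel_deriv a (t - s) (x - y) * f (U s y) \<partial>lborel)"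
      using S U time_space_measurable_section[of U s]
      by (cases "s \<in> S") (auto intro!: dir_deriv_heat_comp[OF _ _ m])
  qed
  also have "\<dots> \<in> borel_measurable lborel"
    unfolding heat_kernel_deriv_def heat_kernel_def by measurable
  finally show "(\<lambda>s. indicator S s * dir_deriv a (heat (t - s) (\<lambda>y. f (U s y))) x) \<in> borel_measurable lborel" .
  fix s assume "s \<in> S"
  with S show "\<bar>dir_deriv a (heat (t - s) (\<lambda>y. f (U s y))) x\<bar>
      \<le> conv_const TYPE('a) * norm a * (L * m powr p) * heat_profile t x
        * ((t - s) powr (-1/2) * s powr (- (real DIM('a) * (p - 1) / 2)))"
    by (intro abs_duhamel_integrand_le[OF _ _ m time_space_measurable_section U]) auto
qed (rule \<sigma>)

lemma abs_duhamel_diff_le: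
  fixes U1 U2 :: "real \<Rightarrow> 'a::euclidean_space \<Rightarrow> real"
  assumes S: "S \<subseteq> {0<..<t}" and Sm: "S \<in> sets borel" and t: "0 < t"
    and m: "0 \<le> m" and d: "0 \<le> d" and \<gamma>: "0 \<le> \<gamma>"
    and \<sigma>: "real DIM('a) * (p - 1) / 2 + \<gamma> < 1"
    and U1m: "time_space_measurable U1" and U2m: "time_space_measurable U2"
    and U1: "\<And>s y. s \<in> S \<Longrightarrow> \<bar>U1 s y\<bar> \<le> m * heat_profile s y"
    and U2: "\<And>s y. s \<in> S \<Longrightarrow> \<bar>U2 s y\<bar> \<le> m * heat_profile s y"
    and D: "\<And>s y. s \<in> S \<Longrightarrow> \<bar>U1 s y - U2 s y\<bar> \<le> d * s powr (- \<gamma>) * heat_profile s y"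
  shows "\<bar>duhamel a f U1 S t x - duhamel a f U2 S t x\<bar>
     \<le> conv_const TYPE('a) * norm a * (2 * L * m powr (p - 1) * d) * heat_profile t x
        * (Beta (1 - (real DIM('a) * (p - 1) / 2 + \<gamma>)) (1/2) * t powr (1/2 - (real DIM('a) * (p - 1) / 2 + \<gamma>)))"
proof -
  have \<sigma>': "real DIM('a) * (p - 1) / 2 < 1" using \<sigma> \<gamma> by linarith
  have "duhamel a f U1 S t x - duhamel a f U2 S t x
     = (\<integral>s. indicator S s * (dir_deriv a (heat (t - s) (\<lambda>y. f (U1 s y))) x
                             - dir_deriv a (heat (t - s) (\<lambda>y. f (U2 s y))) x) \<partial>lborel)"
    using integrable_duhamel_integrand[OF S Sm t m \<sigma>' U1m U1] integrable_duhamel_integrand[OF S Sm t m \<sigma>' U2m U2]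
    unfolding duhamel_def set_lebesgue_integral_def by (simp add: right_diff_distrib)
  also have "\<bar>\<dots>\<bar> \<le> conv_const TYPE('a) * norm a * (2 * L * m powr (p - 1) * d) * heat_profile t x
        * (Beta (1 - (real DIM('a) * (p - 1) / 2 + \<gamma>)) (1/2) * t powr (1/2 - (real DIM('a) * (p - 1) / 2 + \<gamma>)))"
  proof (rule abs_integral_Beta_dominated_le[OF S t])
    show "0 \<le> real DIM('a) * (p - 1) / 2 + \<gamma>" using p_gt_1 \<gamma> by simp
    show "0 \<le> conv_const TYPE('a) * norm a * (2 * L * m powr (p - 1) * d) * heat_profile t x"
      using L_nonneg d by (intro mult_nonneg_nonneg conv_const_nonneg heat_profile_nonneg) auto
    fix s assume sS: "s \<in> S"
    then have s: "0 < s" "s < t" using S by auto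
    have "\<bar>dir_deriv a (heat (t - s) (\<lambda>y. f (U1 s y))) x - dir_deriv a (heat (t - s) (\<lambda>y. f (U2 s y))) x\<bar>
       \<le> conv_const TYPE('a) * norm a * (2 * L * m powr (p - 1) * (d * s powr (- \<gamma>))) * (t - s) powr (-1/2)
          * s powr (- real DIM('a) * (p - 1) / 2) * heat_profile (t - s + s) x"
      using s d D[OF sS] by (intro abs_dir_deriv_heat_comp_diff_le[OF _ _ m _ time_space_measurable_section[OF U1m]
          U1[OF sS] time_space_measurable_section[OF U2m] U2[OF sS]]) (auto simp: mult.assoc)
    also have "s powr (- \<gamma>) * s powr (- real DIM('a) * (p - 1) / 2) = s powr (- (real DIM('a) * (p - 1) / 2 + \<gamma>))"
      unfolding powr_add[symmetric] by (rule arg_cong[where f = "(powr) s"]) (simp add: field_simps)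
    then have "conv_const TYPE('a) * norm a * (2 * L * m powr (p - 1) * (d * s powr (- \<gamma>))) * (t - s) powr (-1/2)
          * s powr (- real DIM('a) * (p - 1) / 2) * heat_profile (t - s + s) x
        = conv_const TYPE('a) * norm a * (2 * L * m powr (p - 1) * d) * heat_profile t x
          * ((t - s) powr (-1/2) * s powr (- (real DIM('a) * (p - 1) / 2 + \<gamma>)))"
      by (simp add: mult_ac)
    finally show "\<bar>dir_deriv a (heat (t - s) (\<lambda>y. f (U1 s y))) x - dir_deriv a (heat (t - s) (\<lambda>y. f (U2 s y))) x\<bar>
       \<le> conv_const TYPE('a) * norm a * (2 * L * m powr (p - 1) * d) * heat_profile t x
          * ((t - s) powr (-1/2) * s powr (- (real DIM('a) * (p - 1) / 2 + \<gamma>)))" .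
  qed (rule \<sigma>)
  finally show ?thesis .
qed

lemma duhamel_split:
  fixes U :: "real \<Rightarrow> 'a::euclidean_space \<Rightarrow> real"
  assumes t: "1 < t" and m: "0 \<le> m"
    and \<sigma>: "real DIM('a) * (p - 1) / 2 < 1"
    and Um: "time_space_measurable U"
    and U: "\<And>s y. s \<in> {0<..<t} \<Longrightarrow> \<bar>U s y\<bar> \<le> m * heat_profile s y"
  shows "duhamel a f U {0<..<t} t x = duhamel a f U {0<..<1} t x + duhamel a f U {1<..<t} t x"
proof -
  let ?D = "\<lambda>s. dir_deriv a (heat (t - s) (\<lambda>y. f (U s y))) x"
  have int: "integrable lborel (\<lambda>s. indicator S s * ?D s)" if "S \<subseteq> {0<..<t}" "S \<in> sets borel" for S
    using t that U by (intro integrable_duhamel_integrand[OF _ _ _ m \<sigma> Um]) auto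
  have i0: "integrable lborel (\<lambda>s. indicator {0<..<t} s * ?D s)"
    and i1: "integrable lborel (\<lambda>s. indicator {0<..<1} s * ?D s)"
    and i2: "integrable lborel (\<lambda>s. indicator {1<..<t} s * ?D s)"
    using t by (auto intro!: int)
  have "(\<integral>s. indicator {0<..<t} s * ?D s \<partial>lborel)
      = (\<integral>s. indicator {0<..<1} s * ?D s + indicator {1<..<t} s * ?D s \<partial>lborel)"
  proof (rule integral_cong_AE)
    show "AE s in lborel. indicator {0<..<t} s * ?D s = indicator {0<..<1} s * ?D s + indicator {1<..<t} s * ?D s"
      using AE_lborel_singleton[of 1] by eventually_elim (use t in \<open>auto simp: indicator_def\<close>)
  qed (use i0 i1 i2 in auto)
  also have "\<dots> = (\<integral>s. indicator {0<..<1} s * ?D s \<partial>lborel) + (\<integral>s. indicator {1<..<t} s * ?D s \<partial>lborel)"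
    by (rule Bochner_Integration.integral_add[OF i1 i2])
  finally show ?thesis unfolding duhamel_def set_lebesgue_integral_def by simp
qed

lemma measurable_duhamel_kernel_form:
  fixes U :: "real \<Rightarrow> 'a::euclidean_space \<Rightarrow> real" and Q :: "real \<Rightarrow> real \<Rightarrow> bool"
  assumes Qm[measurable]: "Measurable.pred (lborel \<Otimes>\<^sub>M lborel) (\<lambda>w. Q (fst w) (snd w))"
    and Um: "time_space_measurable U"
  shows "(\<lambda>z::real \<times> 'a. \<integral>s. (if Q (fst z) s then 1 else 0)
            * (\<integral>y. heat_kernel_deriv a (fst z - s) (snd z - y) * f (U s y) \<partial>lborel) \<partial>lborel)
      \<in> borel_measurable (lborel \<Otimes>\<^sub>M lborel)"
proof (rule lborel.borel_measurable_lebesgue_integral)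
  have "(\<lambda>w::(real \<times> 'a) \<times> real. (fst (fst w), snd w)) \<in> measurable ((lborel \<Otimes>\<^sub>M lborel) \<Otimes>\<^sub>M lborel) (lborel \<Otimes>\<^sub>M lborel)"
    by measurable
  from measurable_compose[OF this Qm]
  have [measurable]: "Measurable.pred ((lborel \<Otimes>\<^sub>M lborel) \<Otimes>\<^sub>M lborel) (\<lambda>w::(real \<times> 'a) \<times> real. Q (fst (fst w)) (snd w))"
    by (simp add: o_def)
  have Ub: "(\<lambda>z. U (fst z) (snd z)) \<in> borel_measurable (borel \<Otimes>\<^sub>M borel)"
    using Um by (subst measurable_cong_sets[OF sets_pair_measure_cong[OF sets_lborel sets_lborel] refl, symmetric])
  have "(\<lambda>w::((real \<times> 'a) \<times> real) \<times> 'a. (snd (fst w), snd w)) \<in> measurable (((borel \<Otimes>\<^sub>M borel) \<Otimes>\<^sub>M borel) \<Otimes>\<^sub>M borel) (borel \<Otimes>\<^sub>M borel)"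
    by measurable
  from measurable_compose[OF this Ub]
  have [measurable]: "(\<lambda>w::((real \<times> 'a) \<times> real) \<times> 'a. U (snd (fst w)) (snd w)) \<in> borel_measurable (((borel \<Otimes>\<^sub>M borel) \<Otimes>\<^sub>M borel) \<Otimes>\<^sub>M borel)"
    by (simp add: o_def)
  have "(\<lambda>w::((real \<times> 'a) \<times> real) \<times> 'a. heat_kernel_deriv a (fst (fst (fst w)) - snd (fst w)) (snd (fst (fst w)) - snd w)
        * f (U (snd (fst w)) (snd w))) \<in> borel_measurable (((lborel \<Otimes>\<^sub>M lborel) \<Otimes>\<^sub>M lborel) \<Otimes>\<^sub>M lborel)"
    unfolding heat_kernel_deriv_def heat_kernel_def by measurable
  then have [measurable]: "(\<lambda>w::(real \<times> 'a) \<times> real. \<integral>y. heat_kernel_deriv a (fst (fst w) - snd w) (snd (fst w) - y) * f (U (snd w) y) \<partial>lborel)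
      \<in> borel_measurable ((lborel \<Otimes>\<^sub>M lborel) \<Otimes>\<^sub>M lborel)"
    by (intro lborel.borel_measurable_lebesgue_integral) (simp add: case_prod_beta)
  have "(\<lambda>w::(real \<times> 'a) \<times> real. (if Q (fst (fst w)) (snd w) then 1 else 0)
      * (\<integral>y. heat_kernel_deriv a (fst (fst w) - snd w) (snd (fst w) - y) * f (U (snd w) y) \<partial>lborel))
      \<in> borel_measurable ((lborel \<Otimes>\<^sub>M lborel) \<Otimes>\<^sub>M lborel)" by measurable
  then show "(\<lambda>(z, s). (if Q (fst z) s then 1 else 0) * (\<integral>y. heat_kernel_deriv a (fst z - s) (snd z - y) * f (U s y) \<partial>lborel))
      \<in> borel_measurable ((lborel \<Otimes>\<^sub>M lborel) \<Otimes>\<^sub>M lborel)" by (simp add: case_prod_beta)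
qed

lemma time_space_measurable_duhamel:
  fixes U :: "real \<Rightarrow> 'a::euclidean_space \<Rightarrow> real" and T :: "real set" and Q :: "real \<Rightarrow> real \<Rightarrow> bool"
  assumes [measurable]: "T \<in> sets borel"
    and Qm: "Measurable.pred (lborel \<Otimes>\<^sub>M lborel) (\<lambda>w. Q (fst w) (snd w))"
    and Um: "time_space_measurable U"
    and Q: "\<And>t s. t \<in> T \<Longrightarrow> Q t s \<Longrightarrow> 0 < s \<and> s < t"
    and U: "\<And>t s. t \<in> T \<Longrightarrow> Q t s \<Longrightarrow> \<exists>m\<ge>0. \<forall>y. \<bar>U s y\<bar> \<le> m * heat_profile s y"
  shows "time_space_measurable (\<lambda>t x. if t \<in> T then duhamel a f U {s. Q t s} t x else 0)"
proof -
  have "duhamel a f U {s. Q t s} t x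
      = (\<integral>s. (if Q t s then 1 else 0) * (\<integral>y. heat_kernel_deriv a (t - s) (x - y) * f (U s y) \<partial>lborel) \<partial>lborel)"
    if t: "t \<in> T" for t x
    unfolding duhamel_def set_lebesgue_integral_def
  proof (intro Bochner_Integration.integral_cong refl)
    fix s
    show "indicator {s. Q t s} s *\<^sub>R dir_deriv a (heat (t - s) (\<lambda>y. f (U s y))) x
        = (if Q t s then 1 else 0) * (\<integral>y. heat_kernel_deriv a (t - s) (x - y) * f (U s y) \<partial>lborel)"
    proof (cases "Q t s")
      case True
      obtain m where m: "0 \<le> m" "\<And>y. \<bar>U s y\<bar> \<le> m * heat_profile s y" using U[OF t True] by blast
      have "0 < t - s" "0 < s" using Q[OF t True] by auto
      from dir_deriv_heat_comp[OF this m(1) time_space_measurable_section[OF Um] m(2)]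
      show ?thesis using True by simp
    qed simp
  qed
  then have "(\<lambda>z. if fst z \<in> T then duhamel a f U {s. Q (fst z) s} (fst z) (snd z) else 0)
      = (\<lambda>z. if fst z \<in> T then (\<integral>s. (if Q (fst z) s then 1 else 0)
            * (\<integral>y. heat_kernel_deriv a (fst z - s) (snd z - y) * f (U s y) \<partial>lborel) \<partial>lborel) else 0)"
    by auto
  moreover have "{z \<in> space (lborel \<Otimes>\<^sub>M lborel). fst z \<in> T} \<in> sets (lborel \<Otimes>\<^sub>M lborel)"
    by measurable
  ultimately show ?thesis
    using measurable_duhamel_kernel_form[OF Qm Um] by simp measurable
qed

end

section \<open>\<open>L\<^sup>q\<close> norms of functions dominated by the heat profile\<close>

lemma nn_integral_powr_le_heat_profile:
  fixes g :: "'a::euclidean_space \<Rightarrow> real"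
  assumes r: "0 < r" and t: "0 < t" and c: "0 \<le> c"
    and g: "\<And>x. \<bar>g x\<bar> \<le> c * heat_profile t x"
  shows "(\<integral>\<^sup>+ x. ennreal (\<bar>g x\<bar> powr r) \<partial>lborel)
     \<le> ennreal (c powr r * (t powr (- real DIM('a) * (r - 1) / 2) * (8 / r) powr (real DIM('a) / 2)) * gaussian_mass TYPE('a))"
proof -
  define n where "n = real DIM('a)"
  have "(\<integral>\<^sup>+ x. ennreal (\<bar>g x\<bar> powr r) \<partial>lborel)
      \<le> (\<integral>\<^sup>+ x. ennreal (c powr r * t powr (- n * r / 2)) * ennreal (exp (- (r / (8 * t)) * (norm ((x::'a) - 0))\<^sup>2)) \<partial>lborel)"
  proof (intro nn_integral_mono)
    fix x :: 'a
    have "\<bar>g x\<bar> powr r \<le> (c * heat_profile t x) powr r" using g r by (intro powr_mono2) auto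
    also have "\<dots> = c powr r * (t powr (- n * r / 2) * exp (- (r / (8 * t)) * (norm x)\<^sup>2))"
      using heat_profile_powr[OF t, of x r] c by (simp add: powr_mult heat_profile_nonneg n_def)
    finally show "ennreal (\<bar>g x\<bar> powr r)
        \<le> ennreal (c powr r * t powr (- n * r / 2)) * ennreal (exp (- (r / (8 * t)) * (norm (x - 0))\<^sup>2))"
      by (simp add: ennreal_mult[symmetric] mult_ac ennreal_leI)
  qed
  also have "\<dots> = ennreal (c powr r * (t powr (- n * r / 2) * (r / (8 * t)) powr (- n / 2)) * gaussian_mass TYPE('a))"
  proof -
    have "0 < r / (8 * t)" using r t by simp
    then show ?thesis
      by (subst nn_integral_cmult, measurable)
        (simp only: nn_integral_gaussian_affine n_def, simp add: ennreal_mult[symmetric] gaussian_mass_nonneg mult_ac)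
  qed
  also have "t powr (- n * r / 2) * (r / (8 * t)) powr (- n / 2) = t powr (- n * (r - 1) / 2) * (8 / r) powr (n / 2)"
    using t r by (simp add: powr_def ln_div ln_mult exp_add[symmetric] field_simps)
  finally show ?thesis by (simp add: n_def)
qed

definition Lq_profile_const :: "ereal \<Rightarrow> 'a::euclidean_space itself \<Rightarrow> real" where
  "Lq_profile_const q _ = (if q = \<infinity> then 1
     else ((8 / real_of_ereal q) powr (real DIM('a) / 2) * gaussian_mass TYPE('a)) powr (1 / real_of_ereal q))"

lemma Lq_profile_const_nonneg: "0 \<le> Lq_profile_const q TYPE('a::euclidean_space)"
  by (simp add: Lq_profile_const_def)

lemma scaled_Lq_norm_le_finite:
  fixes g :: "'a::euclidean_space \<Rightarrow> real"
  assumes r: "1 \<le> r" and t: "0 < t" and c: "0 \<le> c"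
    and g: "\<And>x. \<bar>g x\<bar> \<le> c * heat_profile t x"
  shows "ennreal (t powr (real DIM('a) / 2 * (1 - 1 / r))) * Lq_norm (ereal r) g
     \<le> ennreal (c * Lq_profile_const (ereal r) TYPE('a))"
proof -
  define n where "n = real DIM('a)"
  define K where "K = (8 / r) powr (n / 2) * gaussian_mass TYPE('a)"
  define J where "J = c powr r * t powr (- n * (r - 1) / 2) * K"
  have K: "0 \<le> K" and J: "0 \<le> J" and r0: "0 < r"
    using r by (simp_all add: K_def J_def gaussian_mass_nonneg)
  define I where "I = (\<integral>\<^sup>+ x. ennreal (\<bar>g x\<bar> powr r) \<partial>lborel)"
  have IJ: "I \<le> ennreal J"
    unfolding I_def J_def K_def n_def using nn_integral_powr_le_heat_profile[OF r0 t c g] by (simp add: mult_ac)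
  then have "I \<noteq> \<infinity>" by (auto simp: top_unique)
  moreover have "enn2real I powr (1 / r) \<le> J powr (1 / r)"
    using IJ J r0 enn2real_mono[OF IJ] by (intro powr_mono2) auto
  ultimately have "Lq_norm (ereal r) g \<le> ennreal (J powr (1 / r))"
    unfolding Lq_norm_def by (simp add: I_def[symmetric] Let_def ennreal_leI)
  then have "ennreal (t powr (n / 2 * (1 - 1 / r))) * Lq_norm (ereal r) g
      \<le> ennreal (t powr (n / 2 * (1 - 1 / r))) * ennreal (J powr (1 / r))"
    by (rule mult_left_mono) simp
  also have "\<dots> = ennreal (c * K powr (1 / r))"
  proof -
    have "t powr (n / 2 * (1 - 1 / r)) * J powr (1 / r) = c * K powr (1 / r)"
    proof (cases "c = 0")
      case True then show ?thesis using r0 by (simp add: J_def)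
    next
      case False
      then have "J powr (1 / r) = c * t powr (- n * (r - 1) / (2 * r)) * K powr (1 / r)"
        using c r0 by (simp add: J_def powr_mult powr_powr)
      then have "t powr (n / 2 * (1 - 1 / r)) * J powr (1 / r)
          = (t powr (n / 2 * (1 - 1 / r)) * t powr (- n * (r - 1) / (2 * r))) * (c * K powr (1 / r))"
        by (simp add: algebra_simps)
      also have "t powr (n / 2 * (1 - 1 / r)) * t powr (- n * (r - 1) / (2 * r)) = 1"
        using r0 t by (simp add: powr_add[symmetric] field_simps)
      finally show ?thesis by simp
    qed
    then show ?thesis by (simp add: ennreal_mult[symmetric])
  qed
  finally show ?thesis by (simp add: n_def K_def Lq_profile_const_def)
qed

lemma scaled_Lq_norm_le_infinity:
  fixes g :: "'a::euclidean_space \<Rightarrow> real"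
  assumes t: "0 < t" and c: "0 \<le> c" and gm: "g \<in> borel_measurable lborel"
    and g: "\<And>x. \<bar>g x\<bar> \<le> c * heat_profile t x"
  shows "ennreal (t powr (real DIM('a) / 2)) * Lq_norm \<infinity> g \<le> ennreal c"
proof -
  have "\<bar>g x\<bar> \<le> c * t powr (- real DIM('a) / 2)" for x
  proof -
    have "heat_profile t x \<le> t powr (- real DIM('a) / 2)"
      unfolding heat_profile_def using t by (intro mult_left_le) auto
    then show ?thesis using g[of x] mult_left_mono[OF _ c] by (meson order_trans)
  qed
  then have "esssup lborel (\<lambda>x. ennreal \<bar>g x\<bar>) \<le> ennreal (c * t powr (- real DIM('a) / 2))"
    by (intro esssup_I AE_I2 ennreal_leI) (use gm in measurable)
  then have "ennreal (t powr (real DIM('a) / 2)) * Lq_norm \<infinity> g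
      \<le> ennreal (t powr (real DIM('a) / 2)) * ennreal (c * t powr (- real DIM('a) / 2))"
    unfolding Lq_norm_def by (intro mult_left_mono) auto
  also have "\<dots> = ennreal c"
    using t c by (simp add: ennreal_mult[symmetric] powr_minus field_simps)
  finally show ?thesis .
qed

lemma scaled_Lq_norm_le:
  fixes g :: "'a::euclidean_space \<Rightarrow> real" and q :: ereal
  assumes q: "1 \<le> q" and t: "0 < t" and c: "0 \<le> c"
    and gm: "g \<in> borel_measurable lborel" and g: "\<And>x. \<bar>g x\<bar> \<le> c * heat_profile t x"
  shows "ennreal (t powr (real DIM('a) / 2 * (1 - inv_exp q))) * Lq_norm q g \<le> ennreal (c * Lq_profile_const q TYPE('a))"
proof (cases q)
  case (real r)
  then show ?thesis using scaled_Lq_norm_le_finite[OF _ t c g, of r] q by (simp add: inv_exp_def)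
next
  case PInf
  then show ?thesis using scaled_Lq_norm_le_infinity[OF t c gm g] by (simp add: inv_exp_def Lq_profile_const_def)
qed (use q in simp)

section \<open>The iterates \<open>A\<^sub>0\<^sub>,\<^sub>k\<close>\<close>

definition time_restrict :: "real set \<Rightarrow> (real \<Rightarrow> 'a \<Rightarrow> real) \<Rightarrow> real \<Rightarrow> 'a \<Rightarrow> real" where
  "time_restrict T U s y = (if s \<in> T then U s y else 0)"

lemma time_space_measurable_restrict_gt_1:
  fixes U :: "real \<Rightarrow> 'a::euclidean_space \<Rightarrow> real"
  assumes "time_space_measurable U"
  shows "time_space_measurable (time_restrict {1<..} U)"
proof -
  have sets: "sets (lborel \<Otimes>\<^sub>M lborel) = sets (borel \<Otimes>\<^sub>M (borel :: 'a measure))"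
    by (auto intro!: sets_pair_measure_cong)
  have [measurable]: "(\<lambda>z. U (fst z) (snd z)) \<in> borel_measurable (borel \<Otimes>\<^sub>M (borel :: 'a measure))"
    using assms measurable_cong_sets[OF sets refl] by blast
  have "(\<lambda>z::real \<times> 'a. if 1 < fst z then U (fst z) (snd z) else 0) \<in> borel_measurable (borel \<Otimes>\<^sub>M borel)"
    by measurable
  then show ?thesis
    using measurable_cong_sets[OF sets refl] by (simp add: time_restrict_def)
qed

locale iterate_setting = power_nonlinearity f L p for f L p +
  fixes a :: "'a::euclidean_space" and u0 :: "'a \<Rightarrow> real" and K :: nat
  assumes K_pos: "0 < K"
    and p_lower: "1 + 1 / real DIM('a) < p"
    and p_upper: "p < 1 + real (K + 1) / (real K * real DIM('a))"
begin

abbreviation "A j \<equiv> Aiter a f u0 j"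

definition "time_singularity = real DIM('a) * (p - 1) / 2"

definition "decay_rate = time_singularity - 1/2"

definition "A0_const = \<bar>mass u0\<bar> * (4 * pi) powr (- real DIM('a) / 2)"

definition "duhamel_const m = conv_const TYPE('a) * norm a * (L * m powr p) * Beta (1 - time_singularity) (1/2)"

lemma decay_rate_pos: "0 < decay_rate"
proof -
  have "1 / real DIM('a) < p - 1" using p_lower by simp
  then show ?thesis by (simp add: decay_rate_def time_singularity_def field_simps)
qed

lemma decay_rate_le_K: "j \<le> K \<Longrightarrow> real j * decay_rate < 1/2"
proof -
  assume j: "j \<le> K"
  have "p - 1 < real (K + 1) / (real K * real DIM('a))" using p_upper by simp
  then have "real K * (real DIM('a) * (p - 1)) < real K + 1"
    using K_pos by (simp add: field_simps)
  then have "real K * decay_rate < 1/2" by (simp add: decay_rate_def time_singularity_def field_simps)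
  moreover have "real j * decay_rate \<le> real K * decay_rate"
    using j decay_rate_pos by (intro mult_right_mono) auto
  ultimately show ?thesis by linarith
qed

lemma time_singularity_lt_1: "time_singularity < 1"
  using decay_rate_le_K[of 1] K_pos by (simp add: decay_rate_def)

lemma A0_const_nonneg: "0 \<le> A0_const"
  by (simp add: A0_const_def)

lemma duhamel_const_nonneg: "0 \<le> duhamel_const m"
  using L_nonneg time_singularity_lt_1 by (simp add: duhamel_const_def conv_const_nonneg Beta_def)

lemma abs_A0_le:
  assumes "0 < t"
  shows "\<bar>A0 u0 t x\<bar> \<le> A0_const * heat_profile t x"
proof -
  have "\<bar>mass u0\<bar> * heat_kernel t x \<le> \<bar>mass u0\<bar> * ((4 * pi) powr (- real DIM('a) / 2) * heat_profile t x)"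
    using heat_kernel_le_heat_profile[OF assms] by (rule mult_left_mono) simp
  moreover have "0 \<le> heat_kernel t x" by (simp add: heat_kernel_def)
  ultimately show ?thesis by (simp add: A0_def A0_const_def abs_mult mult_ac)
qed

lemma iterate_0: "A 0 = A0 u0"
  by (simp add: fun_eq_iff)

lemma time_space_measurable_A0: "time_space_measurable (A0 u0)"
  unfolding A0_def heat_kernel_def by measurable

lemma abs_duhamel_le_decay:
  fixes U :: "real \<Rightarrow> 'a \<Rightarrow> real"
  assumes S: "S \<subseteq> {0<..<t}" and t: "0 < t" and m: "0 \<le> m"
    and Um: "\<And>s. s \<in> S \<Longrightarrow> U s \<in> borel_measurable lborel"
    and U: "\<And>s y. s \<in> S \<Longrightarrow> \<bar>U s y\<bar> \<le> m * heat_profile s y"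
  shows "\<bar>duhamel a f U S t x\<bar> \<le> duhamel_const m * t powr (- decay_rate) * heat_profile t x"
  using abs_duhamel_le[OF S t m _ Um U, of a x] time_singularity_lt_1
  by (simp add: duhamel_const_def decay_rate_def time_singularity_def mult_ac)

lemma powr_neg_decay_le_1: "1 \<le> t \<Longrightarrow> t powr (- decay_rate) \<le> 1"
  using powr_mono[of "- decay_rate" 0 t] decay_rate_pos by simp

lemma abs_A1_diff_le:
  assumes "0 < t"
  shows "\<bar>A 1 t x - A 0 t x\<bar> \<le> duhamel_const A0_const * t powr (- decay_rate) * heat_profile t x"
proof -
  have "\<bar>duhamel a f (A0 u0) {0<..<t} t x\<bar> \<le> duhamel_const A0_const * t powr (- decay_rate) * heat_profile t x"
    using time_space_measurable_section[OF time_space_measurable_A0] abs_A0_le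
    by (intro abs_duhamel_le_decay[OF _ assms A0_const_nonneg]) auto
  then show ?thesis by (simp add: One_nat_def)
qed

lemma time_space_measurable_A1: "time_space_measurable (time_restrict {0<..} (A 1))"
proof -
  have "time_space_measurable (\<lambda>t x. if t \<in> {0<..} then duhamel a f (A0 u0) {s. 0 < s \<and> s < t} t x else 0)"
  proof (rule time_space_measurable_duhamel[OF _ _ time_space_measurable_A0])
    show "Measurable.pred (lborel \<Otimes>\<^sub>M lborel) (\<lambda>w::real \<times> real. 0 < snd w \<and> snd w < fst w)"
      by (intro pred_intros_logic borel_measurable_pred_less) measurable
  qed (use A0_const_nonneg abs_A0_le in auto)
  moreover have "(\<lambda>z. if fst z \<in> {0<..} then A0 u0 (fst z) (snd z) else (0::real)) \<in> borel_measurable (lborel \<Otimes>\<^sub>M lborel)"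
    using time_space_measurable_A0 by measurable
  moreover have "(\<lambda>z. time_restrict {0<..} (A 1) (fst z) (snd z))
      = (\<lambda>z. (if fst z \<in> {0<..} then A0 u0 (fst z) (snd z) else 0)
           + (if fst z \<in> {0<..} then duhamel a f (A0 u0) {s. 0 < s \<and> s < fst z} (fst z) (snd z) else 0))"
    by (auto simp: fun_eq_iff time_restrict_def One_nat_def greaterThanLessThan_def greaterThan_def lessThan_def
        Collect_conj_eq)
  ultimately show ?thesis by simp
qed

lemma iterate_Suc_eq:
  assumes "1 \<le> j"
  shows "A (Suc j) t x = A0 u0 t x + duhamel a f (A0 u0) {0<..<1} t x
    + duhamel a f (time_restrict {1<..} (A j)) {1<..<t} t x"
proof -
  obtain i where j: "j = Suc i" using assms by (cases j) auto
  have "duhamel a f (A j) {1<..<t} t x = duhamel a f (time_restrict {1<..} (A j)) {1<..<t} t x"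
    by (rule duhamel_cong) (auto simp: time_restrict_def)
  then show ?thesis by (simp add: j)
qed

text \<open>For j = 1 the Duhamel integral over (0,t) defining A_{0,1} has to be split at s = 1 first.\<close>

lemma iterate_Suc_diff_eq:
  assumes j: "1 \<le> j" and t: "1 < t"
  shows "A (Suc j) t x - A j t x = duhamel a f (time_restrict {1<..} (A j)) {1<..<t} t x
    - duhamel a f (time_restrict {1<..} (A (j - 1))) {1<..<t} t x"
proof (cases "j = 1")
  case True
  have "duhamel a f (A0 u0) {0<..<t} t x = duhamel a f (A0 u0) {0<..<1} t x + duhamel a f (A0 u0) {1<..<t} t x"
    using time_singularity_lt_1 abs_A0_le
    by (intro duhamel_split[OF t A0_const_nonneg _ time_space_measurable_A0]) (auto simp: time_singularity_def)
  moreover have "duhamel a f (A0 u0) {1<..<t} t x = duhamel a f (time_restrict {1<..} (A 0)) {1<..<t} t x"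
    by (rule duhamel_cong) (auto simp: time_restrict_def)
  ultimately show ?thesis using iterate_Suc_eq[OF j, of t x] by (simp add: True One_nat_def)
next
  case False
  then obtain i where "j = Suc i" "1 \<le> i" using j by (cases j) auto
  then show ?thesis using iterate_Suc_eq[of j t x] iterate_Suc_eq[of i t x] by simp
qed

definition iterate_bounds :: "nat \<Rightarrow> bool" where
  "iterate_bounds j \<longleftrightarrow> (\<exists>m d. 0 \<le> m \<and> 0 \<le> d \<and>
     (\<forall>t>1. \<forall>x. \<bar>A j t x\<bar> \<le> m * heat_profile t x \<and> \<bar>A (j - 1) t x\<bar> \<le> m * heat_profile t x
        \<and> \<bar>A j t x - A (j - 1) t x\<bar> \<le> d * t powr (- (real j * decay_rate)) * heat_profile t x)
     \<and> time_space_measurable (time_restrict {1<..} (A j))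
     \<and> time_space_measurable (time_restrict {1<..} (A (j - 1))))"

lemma iterate_bounds_1: "iterate_bounds 1"
proof -
  define m where "m = A0_const + duhamel_const A0_const"
  have bounds: "\<bar>A 1 t x\<bar> \<le> m * heat_profile t x \<and> \<bar>A (1 - 1) t x\<bar> \<le> m * heat_profile t x
      \<and> \<bar>A 1 t x - A (1 - 1) t x\<bar> \<le> duhamel_const A0_const * t powr (- (real 1 * decay_rate)) * heat_profile t x"
    if t: "1 < t" for t and x :: 'a
  proof (intro conjI)
    have "duhamel_const A0_const * t powr (- decay_rate) \<le> duhamel_const A0_const"
      using powr_neg_decay_le_1[of t] t duhamel_const_nonneg by (simp add: mult_left_le)
    then have "duhamel_const A0_const * t powr (- decay_rate) * heat_profile t x \<le> duhamel_const A0_const * heat_profile t x"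
      by (rule mult_right_mono) (rule heat_profile_nonneg)
    moreover have "\<bar>A 1 t x\<bar> \<le> \<bar>A 0 t x\<bar> + \<bar>A 1 t x - A 0 t x\<bar>" by linarith
    ultimately show "\<bar>A 1 t x\<bar> \<le> m * heat_profile t x"
      using abs_A1_diff_le[of t x] abs_A0_le[of t x] t by (simp add: m_def algebra_simps)
    show "\<bar>A (1 - 1) t x\<bar> \<le> m * heat_profile t x"
      using abs_A0_le[of t x] t mult_right_mono[OF _ heat_profile_nonneg, of A0_const m t x] duhamel_const_nonneg
      by (simp add: m_def)
    show "\<bar>A 1 t x - A (1 - 1) t x\<bar> \<le> duhamel_const A0_const * t powr (- (real 1 * decay_rate)) * heat_profile t x"
      using abs_A1_diff_le[of t x] t by simp
  qed
  have eq: "time_restrict {1<..} (A 1) = time_restrict {1<..} (time_restrict {0<..} (A 1))"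
    by (auto simp del: Aiter.simps simp: fun_eq_iff time_restrict_def)
  have "time_space_measurable (time_restrict {1<..} (A 1))"
    unfolding eq by (rule time_space_measurable_restrict_gt_1[OF time_space_measurable_A1])
  moreover have "time_space_measurable (time_restrict {1<..} (A (1 - 1)))"
    unfolding diff_self_eq_0 iterate_0 by (rule time_space_measurable_restrict_gt_1[OF time_space_measurable_A0])
  moreover have "0 \<le> m" using A0_const_nonneg duhamel_const_nonneg by (simp add: m_def)
  ultimately show ?thesis
    unfolding iterate_bounds_def using bounds duhamel_const_nonneg by blast
qed

lemma abs_iterate_Suc_le:
  assumes j: "1 \<le> j" and t: "1 < t" and m: "0 \<le> m"
    and U: "\<And>s y. 1 < s \<Longrightarrow> \<bar>A j s y\<bar> \<le> m * heat_profile s y"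
    and Um: "time_space_measurable (time_restrict {1<..} (A j))"
  shows "\<bar>A (Suc j) t x\<bar> \<le> (A0_const + duhamel_const A0_const + duhamel_const m) * heat_profile t x"
proof -
  have t_le: "c * t powr (- decay_rate) * heat_profile t x \<le> c * heat_profile t x" if "0 \<le> c" for c
    using powr_neg_decay_le_1[of t] t that heat_profile_nonneg[of t x]
    by (intro mult_right_mono) (auto simp: mult_left_le)
  have "\<bar>duhamel a f (A0 u0) {0<..<1} t x\<bar> \<le> duhamel_const A0_const * t powr (- decay_rate) * heat_profile t x"
    using t abs_A0_le time_space_measurable_section[OF time_space_measurable_A0]
    by (intro abs_duhamel_le_decay[OF _ _ A0_const_nonneg]) auto
  moreover have "\<bar>duhamel a f (time_restrict {1<..} (A j)) {1<..<t} t x\<bar>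
      \<le> duhamel_const m * t powr (- decay_rate) * heat_profile t x"
    using t U
    by (intro abs_duhamel_le_decay[OF _ _ m time_space_measurable_section[OF Um]])
      (auto simp del: Aiter.simps simp: time_restrict_def)
  ultimately show ?thesis
    unfolding iterate_Suc_eq[OF j] using abs_A0_le[of t x] t t_le[OF duhamel_const_nonneg[of A0_const]]
      t_le[OF duhamel_const_nonneg[of m]] by (simp add: algebra_simps)
qed

lemma abs_iterate_Suc_diff_le:
  assumes j: "1 \<le> j" and jK: "Suc j \<le> K" and t: "1 < t" and m: "0 \<le> m" and d: "0 \<le> d"
    and U1: "\<And>s y. 1 < s \<Longrightarrow> \<bar>A j s y\<bar> \<le> m * heat_profile s y"
    and U2: "\<And>s y. 1 < s \<Longrightarrow> \<bar>A (j - 1) s y\<bar> \<le> m * heat_profile s y"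
    and D: "\<And>s y. 1 < s \<Longrightarrow> \<bar>A j s y - A (j - 1) s y\<bar> \<le> d * s powr (- (real j * decay_rate)) * heat_profile s y"
    and U1m: "time_space_measurable (time_restrict {1<..} (A j))"
    and U2m: "time_space_measurable (time_restrict {1<..} (A (j - 1)))"
  shows "\<bar>A (Suc j) t x - A j t x\<bar>
     \<le> conv_const TYPE('a) * norm a * (2 * L * m powr (p - 1) * d) * Beta (1 - (time_singularity + real j * decay_rate)) (1/2)
        * t powr (- (real (Suc j) * decay_rate)) * heat_profile t x"
proof -
  have \<gamma>: "0 \<le> real j * decay_rate" using decay_rate_pos by simp
  have Suc_rate: "real (Suc j) * decay_rate = decay_rate + real j * decay_rate"
    by (simp add: algebra_simps)
  then have exponent: "time_singularity + real j * decay_rate = 1/2 + real (Suc j) * decay_rate"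
    by (simp add: decay_rate_def)
  have "\<bar>A (Suc j) t x - A j t x\<bar>
      \<le> conv_const TYPE('a) * norm a * (2 * L * m powr (p - 1) * d) * heat_profile t x
        * (Beta (1 - (time_singularity + real j * decay_rate)) (1/2)
           * t powr (1/2 - (time_singularity + real j * decay_rate)))"
    unfolding iterate_Suc_diff_eq[OF j t] time_singularity_def
  proof (rule abs_duhamel_diff_le[OF _ _ _ m d \<gamma> _ U1m U2m])
    show "real DIM('a) * (p - 1) / 2 + real j * decay_rate < 1"
      using decay_rate_le_K[OF jK] exponent by (simp add: time_singularity_def)
  qed (use t U1 U2 D in \<open>auto simp del: Aiter.simps simp: time_restrict_def\<close>)
  then show ?thesis unfolding exponent by (simp add: mult_ac)
qed

lemma time_space_measurable_iterate_Suc: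
  assumes j: "1 \<le> j" and m: "0 \<le> m"
    and U: "\<And>s y. 1 < s \<Longrightarrow> \<bar>A j s y\<bar> \<le> m * heat_profile s y"
    and Um: "time_space_measurable (time_restrict {1<..} (A j))"
  shows "time_space_measurable (time_restrict {1<..} (A (Suc j)))"
proof -
  have "time_space_measurable (\<lambda>t x. if t \<in> {1<..} then duhamel a f (A0 u0) {s. 0 < s \<and> s < 1} t x else 0)"
  proof (rule time_space_measurable_duhamel[OF _ _ time_space_measurable_A0])
    show "Measurable.pred (lborel \<Otimes>\<^sub>M lborel) (\<lambda>w::real \<times> real. 0 < snd w \<and> snd w < 1)"
      by (intro pred_intros_logic borel_measurable_pred_less) measurable
  qed (use A0_const_nonneg abs_A0_le in auto)
  moreover have "time_space_measurable
      (\<lambda>t x. if t \<in> {1<..} then duhamel a f (time_restrict {1<..} (A j)) {s. 1 < s \<and> s < t} t x else 0)"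
  proof (rule time_space_measurable_duhamel[OF _ _ Um])
    show "Measurable.pred (lborel \<Otimes>\<^sub>M lborel) (\<lambda>w::real \<times> real. 1 < snd w \<and> snd w < fst w)"
      by (intro pred_intros_logic borel_measurable_pred_less) measurable
  qed (use m U in \<open>auto simp del: Aiter.simps simp: time_restrict_def\<close>)
  moreover have "time_space_measurable (time_restrict {1<..} (A0 u0))"
    by (rule time_space_measurable_restrict_gt_1[OF time_space_measurable_A0])
  moreover have "(\<lambda>z. time_restrict {1<..} (A (Suc j)) (fst z) (snd z))
      = (\<lambda>z. time_restrict {1<..} (A0 u0) (fst z) (snd z)
           + (if fst z \<in> {1<..} then duhamel a f (A0 u0) {s. 0 < s \<and> s < 1} (fst z) (snd z) else 0)
           + (if fst z \<in> {1<..} then duhamel a f (time_restrict {1<..} (A j)) {s. 1 < s \<and> s < fst z} (fst z) (snd z) else 0))"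
    using iterate_Suc_eq[OF j]
    by (auto simp del: Aiter.simps simp: fun_eq_iff time_restrict_def greaterThanLessThan_def greaterThan_def
        lessThan_def Collect_conj_eq)
  ultimately show ?thesis by simp
qed

lemma iterate_bounds_Suc:
  assumes bounds: "iterate_bounds j" and j: "1 \<le> j" and jK: "Suc j \<le> K"
  shows "iterate_bounds (Suc j)"
proof -
  obtain m d where m: "0 \<le> m" and d: "0 \<le> d"
    and U1: "\<And>t x. 1 < t \<Longrightarrow> \<bar>A j t x\<bar> \<le> m * heat_profile t x"
    and U2: "\<And>t x. 1 < t \<Longrightarrow> \<bar>A (j - 1) t x\<bar> \<le> m * heat_profile t x"
    and D: "\<And>t x. 1 < t \<Longrightarrow> \<bar>A j t x - A (j - 1) t x\<bar> \<le> d * t powr (- (real j * decay_rate)) * heat_profile t x"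
    and U1m: "time_space_measurable (time_restrict {1<..} (A j))"
    and U2m: "time_space_measurable (time_restrict {1<..} (A (j - 1)))"
    using bounds unfolding iterate_bounds_def by blast
  define m' where "m' = m + A0_const + duhamel_const A0_const + duhamel_const m"
  define d' where "d' = conv_const TYPE('a) * norm a * (2 * L * m powr (p - 1) * d)
    * Beta (1 - (time_singularity + real j * decay_rate)) (1/2)"
  have m': "0 \<le> m'" using m A0_const_nonneg duhamel_const_nonneg by (simp add: m'_def)
  have "real (Suc j) * decay_rate = decay_rate + real j * decay_rate"
    by (simp add: algebra_simps)
  then have "time_singularity + real j * decay_rate < 1"
    using decay_rate_le_K[OF jK] decay_rate_def by linarith
  then have "0 \<le> Beta (1 - (time_singularity + real j * decay_rate)) (1/2)"
    by (simp add: Beta_def)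
  then have d': "0 \<le> d'"
    using L_nonneg d conv_const_nonneg[where 'a='a] by (simp add: d'_def)
  have "\<bar>A (Suc j) t x\<bar> \<le> m' * heat_profile t x \<and> \<bar>A j t x\<bar> \<le> m' * heat_profile t x
      \<and> \<bar>A (Suc j) t x - A j t x\<bar> \<le> d' * t powr (- (real (Suc j) * decay_rate)) * heat_profile t x"
    if t: "1 < t" for t x
  proof (intro conjI)
    have "0 \<le> (m' - m) * heat_profile t x" "0 \<le> (m' - (A0_const + duhamel_const A0_const + duhamel_const m)) * heat_profile t x"
      using m A0_const_nonneg duhamel_const_nonneg[of m] duhamel_const_nonneg[of A0_const]
      by (simp_all add: m'_def heat_profile_nonneg)
    then show "\<bar>A (Suc j) t x\<bar> \<le> m' * heat_profile t x" "\<bar>A j t x\<bar> \<le> m' * heat_profile t x"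
      using abs_iterate_Suc_le[OF j t m U1 U1m, of x] U1[OF t, of x] by (simp_all add: algebra_simps)
    show "\<bar>A (Suc j) t x - A j t x\<bar> \<le> d' * t powr (- (real (Suc j) * decay_rate)) * heat_profile t x"
      using abs_iterate_Suc_diff_le[OF j jK t m d U1 U2 D U1m U2m] by (simp add: d'_def)
  qed
  then show ?thesis
    unfolding iterate_bounds_def using m' d' U1m time_space_measurable_iterate_Suc[OF j m U1 U1m]
    by (intro exI[of _ m'] exI[of _ d']) auto
qed

lemma iterate_bounds: "1 \<le> j \<Longrightarrow> j \<le> K \<Longrightarrow> iterate_bounds j"
proof (induction j rule: dec_induct)
  case base
  show ?case by (rule iterate_bounds_1)
next
  case (step j)
  then show ?case using iterate_bounds_Suc by simp
qed

lemma iterate_section_measurable: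
  assumes "time_space_measurable (time_restrict {1<..} U)" and "1 < t"
  shows "U t \<in> borel_measurable lborel"
  using time_space_measurable_section[OF assms(1), of t] assms(2)
  by (simp add: time_restrict_def[abs_def])

lemma A1_diff_measurable:
  assumes "0 < t"
  shows "(\<lambda>x. A 1 t x - A 0 t x) \<in> borel_measurable lborel"
proof (rule borel_measurable_diff)
  show "A 1 t \<in> borel_measurable lborel"
    using time_space_measurable_section[OF time_space_measurable_A1, of t] assms
    by (simp add: time_restrict_def[abs_def] del: Aiter.simps)
  show "A 0 t \<in> borel_measurable lborel"
    unfolding iterate_0 by (rule time_space_measurable_section[OF time_space_measurable_A0])
qed

lemma scaled_Lq_decay:
  assumes q: "1 \<le> q"
  shows "\<exists>C>0.
        (\<forall>t>1. ennreal (t powr (real DIM('a) / 2 * (1 - inv_exp q))) * Lq_norm q (A K t) \<le> ennreal C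
             \<and> ennreal (t powr (real DIM('a) / 2 * (1 - inv_exp q))) * Lq_norm q (\<lambda>x. A K t x - A (K - 1) t x)
               \<le> ennreal (C * t powr (- real K * (real DIM('a) / 2 * (p - 1) - 1 / 2))))
      \<and> (K = 1 \<longrightarrow> (\<forall>t>0. ennreal (t powr (real DIM('a) / 2 * (1 - inv_exp q)))
                 * Lq_norm q (\<lambda>x. A K t x - A (K - 1) t x)
               \<le> ennreal (C * t powr (- real K * (real DIM('a) / 2 * (p - 1) - 1 / 2)))))"
proof -
  obtain m d where m: "0 \<le> m" and d: "0 \<le> d"
    and U: "\<And>t x. 1 < t \<Longrightarrow> \<bar>A K t x\<bar> \<le> m * heat_profile t x"
    and D: "\<And>t x. 1 < t \<Longrightarrow> \<bar>A K t x - A (K - 1) t x\<bar> \<le> d * t powr (- (real K * decay_rate)) * heat_profile t x"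
    and U1m: "time_space_measurable (time_restrict {1<..} (A K))"
    and U2m: "time_space_measurable (time_restrict {1<..} (A (K - 1)))"
  proof -
    have "iterate_bounds K" using iterate_bounds[of K] K_pos by simp
    then show ?thesis using that unfolding iterate_bounds_def by blast
  qed
  define c where "c = Lq_profile_const q TYPE('a)"
  define C where "C = (m + d + duhamel_const A0_const + 1) * (c + 1)"
  have c: "0 \<le> c" by (simp add: c_def Lq_profile_const_nonneg)
  have C: "0 < C" using m d c duhamel_const_nonneg[of A0_const] by (simp add: C_def add_pos_nonneg)
  have le_C: "b * c \<le> C" if "0 \<le> b" "b \<le> m + d + duhamel_const A0_const" for b
    using that c m d duhamel_const_nonneg[of A0_const] by (simp add: C_def mult_mono)
  have rate: "- real K * (real DIM('a) / 2 * (p - 1) - 1 / 2) = - (real K * decay_rate)"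
    by (simp add: decay_rate_def time_singularity_def)
  let ?N = "\<lambda>t g. ennreal (t powr (real DIM('a) / 2 * (1 - inv_exp q))) * Lq_norm q g"
  have weaken: "?N t g \<le> ennreal (C * r)"
    if N: "?N t g \<le> ennreal (b * r * c)" and b: "0 \<le> b" "b \<le> m + d + duhamel_const A0_const" and r: "0 \<le> r"
    for t g b r
  proof -
    have "b * r * c \<le> C * r" using mult_right_mono[OF le_C[OF b] r] by (simp add: mult_ac)
    then show ?thesis using N by (meson ennreal_leI order_trans)
  qed
  have bound_mass: "?N t (A K t) \<le> ennreal (C * 1)" if t: "1 < t" for t
    using t m d duhamel_const_nonneg[of A0_const]
      scaled_Lq_norm_le[OF q _ m iterate_section_measurable[OF U1m t] U, folded c_def]
    by (intro weaken[of _ _ m]) auto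
  have bound_diff: "?N t (\<lambda>x. A K t x - A (K - 1) t x) \<le> ennreal (C * t powr (- (real K * decay_rate)))"
    if t: "1 < t" for t
  proof -
    have "(\<lambda>x. A K t x - A (K - 1) t x) \<in> borel_measurable lborel"
      using iterate_section_measurable[OF U1m t] iterate_section_measurable[OF U2m t] by (rule borel_measurable_diff)
    moreover have "0 < t" "0 \<le> d * t powr (- (real K * decay_rate))" using t d by simp_all
    ultimately show ?thesis
      using m d duhamel_const_nonneg[of A0_const] scaled_Lq_norm_le[OF q _ _ _ D[OF t], folded c_def]
      by (intro weaken[of _ _ d]) auto
  qed
  have bound_diff_1: "?N t (\<lambda>x. A K t x - A (K - 1) t x) \<le> ennreal (C * t powr (- (real K * decay_rate)))"
    if t: "0 < t" and K: "K = 1" for t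
  proof -
    have "(\<lambda>x. A 1 t x - A 0 t x) \<in> borel_measurable lborel"
      using t by (rule A1_diff_measurable)
    moreover have "0 \<le> duhamel_const A0_const * t powr (- decay_rate)"
      using duhamel_const_nonneg by simp
    ultimately have "?N t (\<lambda>x. A 1 t x - A 0 t x) \<le> ennreal (C * t powr (- decay_rate))"
      using m d duhamel_const_nonneg[of A0_const] scaled_Lq_norm_le[OF q t _ _ abs_A1_diff_le[OF t], folded c_def]
      by (intro weaken[of _ _ "duhamel_const A0_const"]) auto
    then show ?thesis using K by (simp del: Aiter.simps)
  qed
  show ?thesis unfolding rate using C bound_mass bound_diff bound_diff_1 by auto
qed

end

theorem lemma4p1:
  fixes a :: "'a::euclidean_space" and f f' :: "real \<Rightarrow> real"
    and u0 :: "'a \<Rightarrow> real" and p Cf :: real and k :: nat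
  assumes a_nz: "a \<noteq> 0"
    and p_gt1: "1 < p"
    and f_deriv: "\<And>\<xi>. (f has_real_derivative f' \<xi>) (at \<xi>)"
    and f'_cont: "continuous_on UNIV f'"
    and f_nz: "\<exists>\<xi>. f \<xi> \<noteq> 0"
    and f0: "f 0 = 0"
    and f_lip: "\<And>\<xi> \<eta>. \<bar>f \<xi> - f \<eta>\<bar> \<le> Cf * (\<bar>\<xi>\<bar> powr (p - 1) + \<bar>\<eta>\<bar> powr (p - 1)) * \<bar>\<xi> - \<eta>\<bar>"
    and k_pos: "0 < k"
    and p_low: "1 + 1 / real DIM('a) < p"
    and p_up: "p < 1 + real (k + 1) / (real k * real DIM('a))"
    and u0_L1: "integrable lborel u0"
  shows "\<forall>q::ereal. 1 \<le> q \<longrightarrow>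
     (\<exists>C>0.
        (\<forall>t>1. ennreal (t powr (real DIM('a) / 2 * (1 - inv_exp q))) * Lq_norm q (Aiter a f u0 k t) \<le> ennreal C
             \<and> ennreal (t powr (real DIM('a) / 2 * (1 - inv_exp q)))
                 * Lq_norm q (\<lambda>x. Aiter a f u0 k t x - Aiter a f u0 (k - 1) t x)
               \<le> ennreal (C * t powr (- real k * (real DIM('a) / 2 * (p - 1) - 1 / 2))))
      \<and> (k = 1 \<longrightarrow> (\<forall>t>0. ennreal (t powr (real DIM('a) / 2 * (1 - inv_exp q)))
                 * Lq_norm q (\<lambda>x. Aiter a f u0 k t x - Aiter a f u0 (k - 1) t x)
               \<le> ennreal (C * t powr (- real k * (real DIM('a) / 2 * (p - 1) - 1 / 2))))))"
proof -
  have "continuous_on UNIV f"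
    using f_deriv by (meson DERIV_isCont continuous_at_imp_continuous_on)
  moreover have "\<bar>f \<xi> - f \<eta>\<bar> \<le> \<bar>Cf\<bar> * (\<bar>\<xi>\<bar> powr (p - 1) + \<bar>\<eta>\<bar> powr (p - 1)) * \<bar>\<xi> - \<eta>\<bar>" for \<xi> \<eta>
    using f_lip[of \<xi> \<eta>] mult_right_mono[of Cf "\<bar>Cf\<bar>" "(\<bar>\<xi>\<bar> powr (p - 1) + \<bar>\<eta>\<bar> powr (p - 1)) * \<bar>\<xi> - \<eta>\<bar>"]
    by (simp add: mult.assoc abs_ge_self)
  ultimately interpret iterate_setting f "\<bar>Cf\<bar>" p a u0 k
    using f0 p_gt1 k_pos p_low p_up by unfold_locales auto
  show ?thesis using scaled_Lq_decay by blast
qed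

end
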